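(* Let $H_i=H_i(x_{i-1},x_i)$ for $i\in[1,n]$ be two-terminal signed graphs and $G=\mathcal S(H_1,\dots,H_n)$ with $n=|\mathcal B(G)|\ge 2$. Suppose $\mathcal B_0(G)=\emptyset$, $\mathcal B_2(G)\neq\emptyset$, and every $H_i\in\mathcal B_2(G)$ has a $\Psi_{x_{i-1}x_i}(2)$-cover. Then exactly one of the following holds: (1) $G$ has a $\Psi_{x_0x_n}(2)$-cover in which no tadpole at $x_0$ contains the vertex $x_n$ and no tadpole at $x_n$ contains the vertex $x_0$; (2) $\mathcal B_2(G)=\{H_1\}$ and every $\Psi_{x_0x_1}(2)$-cover of $H_1$ contains a tadpole at $x_1$ containing the vertex $x_0$; (3) $\mathcal B_2(G)=\{H_n\}$ and every $\Psi_{x_{n-1}x_n}(2)$-cover of $H_n$ contains a tadpole at $x_{n-1}$ containing the vertex $x_n$.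
   Context: Signed graph: a finite graph (multiple edges and loops allowed) with signature $\sigma:E\to\{1,-1\}$. For a subgraph $S$, $\sigma(S)=\prod_{e\in S}\sigma(e)$; a path is positive if its sign is $1$, negative otherwise. A circuit is a connected $2$-regular subgraph; balanced if it has an even number of negative edges, unbalanced otherwise. A barbell is the union of two unbalanced circuits $C_1,C_2$ and a path $P$ such that either $P$ is trivial and $C_1,C_2$ share exactly one vertex, or $C_1,C_2$ are vertex-disjoint and $P$ joins them meeting $C_1\cup C_2$ only at its ends. A signed circuit is a balanced circuit or a barbell. A tadpole at $x$ is the union of an $xy$-path $P$ (possibly trivial) and an unbalanced circuit $C$ with $V(P)\cap V(C)=\{y\}$. A signed subgraph $6$-cover is a family (multiset) of subgraphs such that every edge lies in exactly $6$ members. For distinct vertices $x,y$ and $t\in[0,3]$, a $\Psi_{xy}(t)$-cover is a signed subgraph $6$-cover consisting of exactly $t$ positive $xy$-paths, $t$ negative $xy$-paths, $t$ tadpoles at $x$, $6-2t$ tadpoles at $y$, and some signed circuits. A two-terminal signed graph $H(x,y)$ is a connected nonempty signed graph with source terminal $x$ and target terminal $y$, where $x=y$ iff $H$ is a single negative loop. The series connection $\mathcal S(H_1,\dots,H_n)$ of pairwise disjoint $H_i(x_i,y_i)$ is obtained from $H_1\cup\dots\cup H_n$ by identifying $y_{i-1}$ with $x_i$ for $i\in[2,n]$, with source $x_1$ and target $y_n$. If $G=\mathcal S(H_1,\dots,H_n)$ with $n$ maximum, the $H_i$ are the parts of $G$, forming $\mathcal B(G)$; $\mathcal B_0(G)$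 = parts with equal terminals (negative loops), $\mathcal B_1(G)$ = parts with distinct terminals and one edge, $\mathcal B_2(G)$ = parts with distinct terminals and at least two edges. *)

theory Defs
  imports Main "HOL-Library.Multiset"
begin

text \<open>A signed graph is given by a vertex set V, an edge set E, an endpoint map
  ends (each edge has one endpoint = loop, or two endpoints) and a signature sig
  with values 1 / -1.  Subgraphs are pairs (vertex set, edge set).\<close>

type_synonym ('v,'e) sg = "'v set \<times> 'e set"

definition signed_graph :: "('e \<Rightarrow> 'v set) \<Rightarrow> ('e \<Rightarrow> int) \<Rightarrow> 'v set \<Rightarrow> 'e set \<Rightarrow> bool" where
  "signed_graph ends sig V E \<longleftrightarrow> finite V \<and> finite E \<and>
     (\<forall>e\<in>E. ends e \<subseteq> V \<and> card (ends e) \<in> {1,2} \<and> sig e \<in> {1,-1})"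

definition sg_union :: "('v,'e) sg \<Rightarrow> ('v,'e) sg \<Rightarrow> ('v,'e) sg" where
  "sg_union A B = (fst A \<union> fst B, snd A \<union> snd B)"

definition is_subgraph :: "('e \<Rightarrow> 'v set) \<Rightarrow> 'v set \<Rightarrow> 'e set \<Rightarrow> ('v,'e) sg \<Rightarrow> bool" where
  "is_subgraph ends V E S \<longleftrightarrow> fst S \<subseteq> V \<and> snd S \<subseteq> E \<and> (\<forall>e\<in>snd S. ends e \<subseteq> fst S)"

definition sg_connected :: "('e \<Rightarrow> 'v set) \<Rightarrow> ('v,'e) sg \<Rightarrow> bool" where
  "sg_connected ends S \<longleftrightarrow> fst S \<noteq> {} \<and> (\<forall>e\<in>snd S. ends e \<subseteq> fst S) \<and>
     (\<forall>u\<in>fst S. \<forall>v\<in>fst S. (u, v) \<in> {(a, b). \<exists>e\<in>snd S. ends e = {a, b}}\<^sup>*)"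

definition sg_deg :: "('e \<Rightarrow> 'v set) \<Rightarrow> 'e set \<Rightarrow> 'v \<Rightarrow> nat" where
  "sg_deg ends ES v = card {e\<in>ES. v \<in> ends e \<and> card (ends e) = 2} + 2 * card {e\<in>ES. ends e = {v}}"

definition sg_sign :: "('e \<Rightarrow> int) \<Rightarrow> ('v,'e) sg \<Rightarrow> int" where
  "sg_sign sig S = (\<Prod>e\<in>snd S. sig e)"

definition is_circuit :: "('e \<Rightarrow> 'v set) \<Rightarrow> ('v,'e) sg \<Rightarrow> bool" where
  "is_circuit ends C \<longleftrightarrow> sg_connected ends C \<and> (\<forall>v\<in>fst C. sg_deg ends (snd C) v = 2)"

definition balanced :: "('e \<Rightarrow> int) \<Rightarrow> ('v,'e) sg \<Rightarrow> bool" where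
  "balanced sig C \<longleftrightarrow> even (card {e\<in>snd C. sig e = -1})"

definition is_path :: "('e \<Rightarrow> 'v set) \<Rightarrow> 'v \<Rightarrow> 'v \<Rightarrow> ('v,'e) sg \<Rightarrow> bool" where
  "is_path ends x y P \<longleftrightarrow> (\<exists>vs es. length vs = Suc (length es) \<and> distinct vs \<and> distinct es \<and>
      hd vs = x \<and> last vs = y \<and>
      (\<forall>i<length es. ends (es ! i) = {vs ! i, vs ! Suc i}) \<and>
      P = (set vs, set es))"

definition is_barbell :: "('e \<Rightarrow> 'v set) \<Rightarrow> ('e \<Rightarrow> int) \<Rightarrow> ('v,'e) sg \<Rightarrow> bool" where
  "is_barbell ends sig B \<longleftrightarrow> (\<exists>C1 C2 P.
      is_circuit ends C1 \<and> is_circuit ends C2 \<and> C1 \<noteq> C2 \<and>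
      \<not> balanced sig C1 \<and> \<not> balanced sig C2 \<and>
      B = sg_union (sg_union C1 C2) P \<and>
      ((\<exists>u. P = ({u}, {}) \<and> fst C1 \<inter> fst C2 = {u}) \<or>
       (fst C1 \<inter> fst C2 = {} \<and> (\<exists>u v. u \<in> fst C1 \<and> v \<in> fst C2 \<and> is_path ends u v P \<and>
           fst P \<inter> (fst C1 \<union> fst C2) = {u, v}))))"

definition signed_circuit :: "('e \<Rightarrow> 'v set) \<Rightarrow> ('e \<Rightarrow> int) \<Rightarrow> ('v,'e) sg \<Rightarrow> bool" where
  "signed_circuit ends sig S \<longleftrightarrow> (is_circuit ends S \<and> balanced sig S) \<or> is_barbell ends sig S"

definition is_tadpole :: "('e \<Rightarrow> 'v set) \<Rightarrow> ('e \<Rightarrow> int) \<Rightarrow> 'v \<Rightarrow> ('v,'e) sg \<Rightarrow> bool" where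
  "is_tadpole ends sig x T \<longleftrightarrow> (\<exists>y P C. is_path ends x y P \<and> is_circuit ends C \<and>
      \<not> balanced sig C \<and> fst P \<inter> fst C = {y} \<and> T = sg_union P C)"

definition six_cover :: "('e \<Rightarrow> 'v set) \<Rightarrow> 'v set \<Rightarrow> 'e set \<Rightarrow> ('v,'e) sg multiset \<Rightarrow> bool" where
  "six_cover ends V E F \<longleftrightarrow> (\<forall>S\<in>#F. is_subgraph ends V E S) \<and>
     (\<forall>e\<in>E. size (filter_mset (\<lambda>S. e \<in> snd S) F) = 6)"

definition psi_cover :: "('e \<Rightarrow> 'v set) \<Rightarrow> ('e \<Rightarrow> int) \<Rightarrow> 'v set \<Rightarrow> 'e set \<Rightarrow> 'v \<Rightarrow> 'v \<Rightarrow> nat \<Rightarrow>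
   ('v,'e) sg multiset \<Rightarrow> ('v,'e) sg multiset \<Rightarrow> ('v,'e) sg multiset \<Rightarrow> ('v,'e) sg multiset \<Rightarrow>
   ('v,'e) sg multiset \<Rightarrow> bool" where
  "psi_cover ends sig V E x y t Pp Pn Tx Ty Cs \<longleftrightarrow>
     x \<in> V \<and> y \<in> V \<and> x \<noteq> y \<and> t \<le> 3 \<and>
     six_cover ends V E (Pp + Pn + Tx + Ty + Cs) \<and>
     size Pp = t \<and> size Pn = t \<and> size Tx = t \<and> size Ty = 6 - 2 * t \<and>
     (\<forall>P\<in>#Pp. is_path ends x y P \<and> sg_sign sig P = 1) \<and>
     (\<forall>P\<in>#Pn. is_path ends x y P \<and> sg_sign sig P = -1) \<and>
     (\<forall>T\<in>#Tx. is_tadpole ends sig x T) \<and>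
     (\<forall>T\<in>#Ty. is_tadpole ends sig y T) \<and>
     (\<forall>C\<in>#Cs. signed_circuit ends sig C)"

definition two_terminal :: "('e \<Rightarrow> 'v set) \<Rightarrow> ('e \<Rightarrow> int) \<Rightarrow> 'v set \<Rightarrow> 'e set \<Rightarrow> 'v \<Rightarrow> 'v \<Rightarrow> bool" where
  "two_terminal ends sig VH EH x y \<longleftrightarrow> sg_connected ends (VH, EH) \<and> x \<in> VH \<and> y \<in> VH \<and>
     (x = y \<longleftrightarrow> (VH = {x} \<and> (\<exists>e. EH = {e} \<and> ends e = {x} \<and> sig e = -1)))"

text \<open>(V,E) with source xs 0 and target xs n is the series connection of the parts
  H_i = (PV i, PE i) with terminals xs (i-1), xs i, i = 1..n, realised inside (V,E):
  the parts are edge-disjoint and two parts H_i, H_j (i < j) share exactly the vertex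
  x_i if all parts strictly between them are negative loops (so x_i = ... = x_(j-1)),
  and no vertex otherwise.\<close>
definition series_conn :: "('e \<Rightarrow> 'v set) \<Rightarrow> ('e \<Rightarrow> int) \<Rightarrow> 'v set \<Rightarrow> 'e set \<Rightarrow> nat \<Rightarrow>
    (nat \<Rightarrow> 'v) \<Rightarrow> (nat \<Rightarrow> 'v set) \<Rightarrow> (nat \<Rightarrow> 'e set) \<Rightarrow> bool" where
  "series_conn ends sig V E n xs PV PE \<longleftrightarrow> n \<ge> 1 \<and>
     (\<forall>i\<in>{1..n}. two_terminal ends sig (PV i) (PE i) (xs (i - 1)) (xs i)) \<and>
     V = (\<Union>i\<in>{1..n}. PV i) \<and> E = (\<Union>i\<in>{1..n}. PE i) \<and>
     (\<forall>i\<in>{1..n}. \<forall>j\<in>{1..n}. i < j \<longrightarrow> PE i \<inter> PE j = {} \<and>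
        PV i \<inter> PV j = (if (\<forall>k. i < k \<and> k < j \<longrightarrow> xs (k - 1) = xs k) then {xs i} else {}))"

text \<open>The decomposition has the maximum number of parts among all series decompositions
  of G with the same source and target; then the parts form B(G).\<close>
definition series_parts :: "('e \<Rightarrow> 'v set) \<Rightarrow> ('e \<Rightarrow> int) \<Rightarrow> 'v set \<Rightarrow> 'e set \<Rightarrow> nat \<Rightarrow>
    (nat \<Rightarrow> 'v) \<Rightarrow> (nat \<Rightarrow> 'v set) \<Rightarrow> (nat \<Rightarrow> 'e set) \<Rightarrow> bool" where
  "series_parts ends sig V E n xs PV PE \<longleftrightarrow> series_conn ends sig V E n xs PV PE \<and>
     (\<forall>m ys QV QE. series_conn ends sig V E m ys QV QE \<and> ys 0 = xs 0 \<and> ys m = xs n \<longrightarrow> m \<le> n)"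

definition B0_idx :: "nat \<Rightarrow> (nat \<Rightarrow> 'v) \<Rightarrow> nat set" where
  "B0_idx n xs = {i\<in>{1..n}. xs (i - 1) = xs i}"

definition B1_idx :: "nat \<Rightarrow> (nat \<Rightarrow> 'v) \<Rightarrow> (nat \<Rightarrow> 'e set) \<Rightarrow> nat set" where
  "B1_idx n xs PE = {i\<in>{1..n}. xs (i - 1) \<noteq> xs i \<and> card (PE i) = 1}"

definition B2_idx :: "nat \<Rightarrow> (nat \<Rightarrow> 'v) \<Rightarrow> (nat \<Rightarrow> 'e set) \<Rightarrow> nat set" where
  "B2_idx n xs PE = {i\<in>{1..n}. xs (i - 1) \<noteq> xs i \<and> card (PE i) \<ge> 2}"

definition exactly_one3 :: "bool \<Rightarrow> bool \<Rightarrow> bool \<Rightarrow> bool" where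
  "exactly_one3 a b c \<longleftrightarrow> (a \<and> \<not> b \<and> \<not> c) \<or> (\<not> a \<and> b \<and> \<not> c) \<or> (\<not> a \<and> \<not> b \<and> c)"

end

theory Submission
  imports Defs
begin

text \<open>Write \<open>G\<^sub>k\<close> for the series connection of the first \<open>k\<close> parts. Scanning the parts from left to
  right, \<open>G\<^sub>k\<close> is a path as long as no part of \<open>B\<^sub>2\<close> has occurred, and afterwards it carries a
  \<open>\<Psi>(2)\<close>-cover: a further single-edge part lengthens the paths and the tadpoles at the current
  target, a path in front of a part of \<open>B\<^sub>2\<close> lengthens the paths and source tadpoles of its cover,
  and two covers are glued at their common terminal by joining paths of equal and of opposite signs
  and pairing the target tadpoles of the left cover with the source tadpoles of the right one into
  barbells. Hence the tadpoles at \<open>x\<^sub>0\<close> of the final cover of \<open>G\<close> come from the first part of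
  \<open>B\<^sub>2\<close> and those at \<open>x\<^sub>n\<close> from the last one, which gives (1) unless \<open>B\<^sub>2\<close> consists of \<open>H\<^sub>1\<close> or
  \<open>H\<^sub>n\<close> alone and every cover of that part has a tadpole through the far terminal. Conversely,
  single-edge parts are bridges by the parity of cuts, so if \<open>B\<^sub>2 = {H\<^sub>n}\<close> the signed circuits and
  the tadpoles at \<open>x\<^sub>n\<close> of a cover of \<open>G\<close> stay inside \<open>H\<^sub>n\<close>, every edge outside \<open>H\<^sub>n\<close> lies on all six
  remaining members, and cutting these edges off leaves a cover of \<open>H\<^sub>n\<close>; this makes the three
  alternatives exclusive.\<close>

lemma hd_last_conv_nth:
  assumes "length vs = Suc n" "hd vs = x" "last vs = y"
  shows "vs ! 0 = x" "vs ! n = y"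
  using assms by (cases vs; simp; metis last_conv_nth length_Cons list.distinct(1) diff_Suc_1)+

lemma nat_crossing_step:
  assumes "P i" "\<not> P k" "i \<le> k"
  shows "\<exists>p. i \<le> p \<and> p < k \<and> P p \<and> \<not> P (Suc p)"
  using assms(3,2)
proof (induction k rule: dec_induct)
  case base then show ?case using assms(1) by simp
next
  case (step k) then show ?case by (cases "P k") (auto intro: less_SucI)
qed

lemma set_drop_conv_nth: "set (drop p xs) = {xs ! k | k. p \<le> k \<and> k < length xs}"
  unfolding drop_eq_nths set_nths by auto

lemma size_mset_2E:
  assumes "size M = 2"
  obtains u v where "M = {#u, v#}"
proof -
  obtain u N where "M = add_mset u N" "size N = 1" using size_eq_Suc_imp_eq_union[of M 1] assms by auto
  moreover obtain v where "N = {#v#}" using size_1_singleton_mset[OF \<open>size N = 1\<close>] by blast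
  ultimately show ?thesis using that by auto
qed

lemma bchoice_5:
  assumes "\<forall>i\<in>A. \<exists>a b c d e. P i a b c d e"
  obtains fa fb fc fd fe where "\<forall>i\<in>A. P i (fa i) (fb i) (fc i) (fd i) (fe i)"
proof -
  obtain fa where "\<forall>i\<in>A. \<exists>b c d e. P i (fa i) b c d e" using bchoice[OF assms] ..
  then obtain fb where "\<forall>i\<in>A. \<exists>c d e. P i (fa i) (fb i) c d e" by (auto dest: bchoice)
  then obtain fc where "\<forall>i\<in>A. \<exists>d e. P i (fa i) (fb i) (fc i) d e" by (auto dest: bchoice)
  then obtain fd where "\<forall>i\<in>A. \<exists>e. P i (fa i) (fb i) (fc i) (fd i) e" by (auto dest: bchoice)
  then obtain fe where "\<forall>i\<in>A. P i (fa i) (fb i) (fc i) (fd i) (fe i)" by (auto dest: bchoice)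
  then show ?thesis using that by blast
qed

lemma is_pathE:
  assumes "is_path ends x y P"
  obtains vs es where "length vs = Suc (length es)" "distinct vs" "distinct es"
    "hd vs = x" "last vs = y" "\<forall>i<length es. ends (es ! i) = {vs ! i, vs ! Suc i}"
    "P = (set vs, set es)"
  using assms unfolding is_path_def by blast

lemma is_path_terminals:
  assumes "is_path ends x y P"
  shows "x \<in> fst P" "y \<in> fst P"
proof -
  obtain vs es where "length vs = Suc (length es)" "hd vs = x" "last vs = y" "P = (set vs, set es)"
    using assms by (rule is_pathE)
  moreover have "vs \<noteq> []" using calculation(1) by auto
  ultimately show "x \<in> fst P" "y \<in> fst P" by auto
qed

lemma is_path_finite_edges: "is_path ends x y P \<Longrightarrow> finite (snd P)"
  by (auto elim: is_pathE)

lemma is_path_edge_ends: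
  assumes "is_path ends x y P" "e \<in> snd P"
  shows "ends e \<subseteq> fst P" "card (ends e) = 2"
proof -
  obtain vs es where L: "length vs = Suc (length es)" "distinct vs"
      "\<forall>i<length es. ends (es ! i) = {vs ! i, vs ! Suc i}" "P = (set vs, set es)"
    using assms(1) by (auto elim!: is_pathE)
  then obtain i where i: "i < length es" "e = es ! i"
    using assms(2) by (auto simp: in_set_conv_nth)
  have "vs ! i \<noteq> vs ! Suc i" using L(1,2) i(1) by (simp add: nth_eq_iff_index_eq)
  then show "ends e \<subseteq> fst P" "card (ends e) = 2" using L i by auto
qed

lemma is_path_trivial:
  assumes "is_path ends x x P" shows "P = ({x}, {})"
proof -
  obtain vs es where L: "length vs = Suc (length es)" "distinct vs"
      "hd vs = x" "last vs = x" "P = (set vs, set es)"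
    using assms by (auto elim!: is_pathE)
  have "vs ! 0 = x" "vs ! length es = x" using hd_last_conv_nth[OF L(1,3,4)] by auto
  with L(1,2) have "es = []" by (cases es) (auto simp: nth_eq_iff_index_eq)
  with L show ?thesis by (cases vs) auto
qed

lemma is_path_rev:
  assumes "is_path ends x y P" shows "is_path ends y x P"
proof -
  obtain vs es where L: "length vs = Suc (length es)" "distinct vs" "distinct es"
      "hd vs = x" "last vs = y" "\<forall>i<length es. ends (es ! i) = {vs ! i, vs ! Suc i}"
      "P = (set vs, set es)"
    using assms by (rule is_pathE)
  have "ends (rev es ! i) = {rev vs ! i, rev vs ! Suc i}" if i: "i < length es" for i
  proof -
    let ?j = "length es - 1 - i"
    have "rev es ! i = es ! ?j" "rev vs ! i = vs ! Suc ?j" "rev vs ! Suc i = vs ! ?j"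
      using i L(1) by (simp_all add: rev_nth Suc_diff_Suc)
    then show ?thesis using L(6) i by auto
  qed
  moreover have "vs \<noteq> []" using L(1) by auto
  ultimately show ?thesis
    unfolding is_path_def using L by (intro exI[of _ "rev vs"] exI[of _ "rev es"]) (auto simp: hd_rev last_rev)
qed

lemma is_path_single_edge:
  assumes "ends e = {x, y}" "x \<noteq> y"
  shows "is_path ends x y ({x, y}, {e})"
  unfolding is_path_def using assms by (intro exI[of _ "[x, y]"] exI[of _ "[e]"]) auto

lemma is_path_append:
  assumes P: "is_path ends a b P" and Q: "is_path ends b c Q" and meet: "fst P \<inter> fst Q = {b}"
  shows "is_path ends a c (sg_union P Q)"
proof -
  obtain vs es where L: "length vs = Suc (length es)" "distinct vs" "distinct es"
      "hd vs = a" "last vs = b" "\<forall>i<length es. ends (es ! i) = {vs ! i, vs ! Suc i}"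
      "P = (set vs, set es)"
    using P by (rule is_pathE)
  obtain ws fs where M: "length ws = Suc (length fs)" "distinct ws" "distinct fs"
      "hd ws = b" "last ws = c" "\<forall>i<length fs. ends (fs ! i) = {ws ! i, ws ! Suc i}"
      "Q = (set ws, set fs)"
    using Q by (rule is_pathE)
  define us where "us = butlast vs @ ws"
  have b: "vs ! length es = b" "ws ! 0 = b"
    using hd_last_conv_nth[OF L(1,4,5)] hd_last_conv_nth[OF M(1,4,5)] by auto
  have vs: "vs = butlast vs @ [b]" using L(1,5) by (metis append_butlast_last_id list.size(3) nat.distinct(1))
  have len: "length (butlast vs) = length es" using L(1) by simp
  have us_nth: "us ! k = (if k \<le> length es then vs ! k else ws ! (k - length es))" for k
    using b len by (auto simp: us_def nth_append nth_butlast)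
  have "b \<notin> set (butlast vs)" using L(2) vs by (metis distinct_append not_distinct_conv_prefix)
  then have vdisj: "set (butlast vs) \<inter> set ws = {}" using meet L(7) M(7) by (auto dest: in_set_butlastD)
  have "set es \<inter> set fs = {}"
  proof (rule ccontr)
    assume "set es \<inter> set fs \<noteq> {}"
    then obtain e where e: "e \<in> snd P" "e \<in> snd Q" using L(7) M(7) by auto
    have "ends e \<subseteq> fst P \<inter> fst Q" using is_path_edge_ends(1)[OF P e(1)] is_path_edge_ends(1)[OF Q e(2)] by blast
    then have "ends e \<subseteq> {b}" "card (ends e) = 2" using meet is_path_edge_ends(2)[OF P e(1)] by auto
    then show False using card_mono[of "{b}" "ends e"] by simp
  qed
  moreover have "ends ((es @ fs) ! i) = {us ! i, us ! Suc i}" if "i < length (es @ fs)" for i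
    using that L(6) M(6) b by (cases "i < length es") (auto simp: nth_append us_nth Suc_diff_le)
  moreover have "sg_union P Q = (set us, set (es @ fs))"
  proof -
    have "set vs = insert b (set (butlast vs))" using arg_cong[where f = set, OF vs] by simp
    moreover have "b \<in> set ws" using b(2) M(1) by (metis nth_mem zero_less_Suc)
    ultimately show ?thesis using L(7) M(7) unfolding us_def sg_union_def by auto
  qed
  moreover have "distinct us" using L(2) M(2) vdisj unfolding us_def by (simp add: distinct_butlast)
  moreover have "hd us = a" "last us = c" "length us = Suc (length (es @ fs))"
  proof -
    have "vs \<noteq> []" "ws \<noteq> []" using L(1) M(1) by auto
    then show "hd us = a" "last us = c" "length us = Suc (length (es @ fs))"
      using us_nth[of 0] hd_conv_nth[of us] hd_conv_nth[of vs] L(1,4) M(1,5) unfolding us_def by (auto simp: len)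
  qed
  ultimately show ?thesis
    unfolding is_path_def using L(3) M(3) by (intro exI[of _ us] exI[of _ "es @ fs"]) auto
qed

section \<open>Paths into a vertex set attached at a single vertex\<close>

definition attached_at :: "('e \<Rightarrow> 'v set) \<Rightarrow> 'e set \<Rightarrow> 'v set \<Rightarrow> 'v \<Rightarrow> bool" where
  "attached_at ends E S c \<longleftrightarrow> (\<forall>e\<in>E. ends e \<inter> S \<noteq> {} \<and> \<not> ends e \<subseteq> S \<longrightarrow> ends e \<inter> S = {c})"

lemma attached_at_crossing:
  assumes "attached_at ends E S c" "e \<in> E" "ends e = {u, v}" "u \<in> S" "v \<notin> S"
  shows "u = c"
  using assms unfolding attached_at_def by blast

lemma attached_at_path_convex:
  assumes A: "attached_at ends E S c"
    and vs: "distinct vs" "length vs = Suc (length es)" "\<forall>i<length es. ends (es ! i) = {vs ! i, vs ! Suc i}"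
    and es: "set es \<subseteq> E"
    and ij: "i \<le> k" "k \<le> j" "j < length vs" "vs ! i \<in> S" "vs ! j \<in> S"
  shows "vs ! k \<in> S"
proof (rule ccontr)
  assume k: "vs ! k \<notin> S"
  have edge: "es ! p \<in> E" "ends (es ! p) = {vs ! p, vs ! Suc p}" if "p < length es" for p
    using that vs(3) es by auto
  obtain p where p: "i \<le> p" "p < k" "vs ! p \<in> S" "vs ! Suc p \<notin> S"
    using nat_crossing_step[of "\<lambda>p. vs ! p \<in> S"] ij(1,4) k by blast
  obtain q where q: "k \<le> q" "q < j" "vs ! q \<notin> S" "vs ! Suc q \<in> S"
    using nat_crossing_step[of "\<lambda>p. vs ! p \<notin> S"] ij(2,5) k by blast
  have "vs ! p = c"
    using attached_at_crossing[OF A edge p(3,4)] p ij vs(2) by simp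
  moreover have "vs ! Suc q = c"
  proof -
    have "q < length es" using q(2) ij(3) vs(2) by simp
    then have "es ! q \<in> E" "ends (es ! q) = {vs ! Suc q, vs ! q}" using edge[of q] by (auto simp: insert_commute)
    then show ?thesis using attached_at_crossing[OF A _ _ q(4,3)] by blast
  qed
  moreover have "vs ! p \<noteq> vs ! Suc q"
    using vs(1) p(2) q(1,2) ij(3) by (subst nth_eq_iff_index_eq) auto
  ultimately show False by simp
qed

lemma attached_at_path_inside:
  assumes A: "attached_at ends E S c" and Q: "is_path ends u w Q" "snd Q \<subseteq> E"
    and uw: "u \<in> S" "w \<in> S"
  shows "fst Q \<subseteq> S"
proof -
  obtain vs es where L: "length vs = Suc (length es)" "distinct vs"
      "hd vs = u" "last vs = w" "\<forall>i<length es. ends (es ! i) = {vs ! i, vs ! Suc i}"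
      "Q = (set vs, set es)"
    using Q(1) by (rule is_pathE)
  have "vs ! 0 = u" "vs ! length es = w" using hd_last_conv_nth[OF L(1,3,4)] by auto
  then have "vs ! k \<in> S" if "k < length vs" for k
    using attached_at_path_convex[OF A L(2,1,5), where i = 0 and k = k and j = "length es"]
      that L(1,6) Q(2) uw by auto
  then show ?thesis using L(6) by (auto simp: in_set_conv_nth)
qed

lemma attached_at_path_suffix:
  assumes A: "attached_at ends E S c" and Q: "is_path ends a w Q" "snd Q \<subseteq> E"
    and aw: "a \<notin> S" "w \<in> S"
  shows "is_path ends c w (fst Q \<inter> S, {e \<in> snd Q. ends e \<subseteq> S})"
proof -
  obtain vs es where L: "length vs = Suc (length es)" "distinct vs" "distinct es"
      "hd vs = a" "last vs = w" "\<forall>i<length es. ends (es ! i) = {vs ! i, vs ! Suc i}"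
      "Q = (set vs, set es)"
    using Q(1) by (rule is_pathE)
  have ends: "vs ! 0 = a" "vs ! length es = w" using hd_last_conv_nth[OF L(1,4,5)] by auto
  define p where "p = (LEAST i. vs ! i \<in> S)"
  have pS: "vs ! p \<in> S" and ple: "p \<le> length es"
    unfolding p_def using ends aw by (auto intro: LeastI Least_le)
  have p0: "p > 0" using pS ends aw by (cases p) auto
  have inS: "vs ! k \<in> S \<longleftrightarrow> p \<le> k" if k: "k < length vs" for k
  proof
    show "vs ! k \<in> S \<Longrightarrow> p \<le> k" unfolding p_def by (rule Least_le)
    show "p \<le> k \<Longrightarrow> vs ! k \<in> S"
      using attached_at_path_convex[OF A L(2,1,6), where i = p and k = k and j = "length es"]
        k L(1,7) Q(2) pS ends aw by auto
  qed
  have "vs ! p = c"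
  proof -
    have "es ! (p - 1) \<in> E" "ends (es ! (p - 1)) = {vs ! p, vs ! (p - 1)}"
      using L(6,7) Q(2) p0 ple by (auto simp: insert_commute)
    then show ?thesis using attached_at_crossing[OF A] pS inS[of "p - 1"] p0 L(1) ple by auto
  qed
  have edge_inS: "ends (es ! k) \<subseteq> S \<longleftrightarrow> p \<le> k" if "k < length es" for k
    using that L(1,6) inS[of k] inS[of "Suc k"] by auto
  have "fst Q \<inter> S = {vs ! k | k. k < length vs \<and> vs ! k \<in> S}"
    unfolding L(7) set_conv_nth by auto
  also have "\<dots> = set (drop p vs)"
    unfolding set_drop_conv_nth using inS by (intro Collect_cong ex_cong1) auto
  finally have "fst Q \<inter> S = set (drop p vs)" .
  moreover have "{e \<in> snd Q. ends e \<subseteq> S} = {es ! k | k. k < length es \<and> ends (es ! k) \<subseteq> S}"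
    unfolding L(7) set_conv_nth by auto
  moreover have "\<dots> = set (drop p es)"
    unfolding set_drop_conv_nth using edge_inS by (intro Collect_cong ex_cong1) auto
  ultimately show ?thesis
    unfolding is_path_def using L \<open>vs ! p = c\<close> ple
    by (intro exI[of _ "drop p vs"] exI[of _ "drop p es"]) (auto simp: hd_drop_conv_nth)
qed

definition edge_count :: "'e \<Rightarrow> ('v,'e) sg multiset \<Rightarrow> nat" where
  "edge_count e F = size (filter_mset (\<lambda>S. e \<in> snd S) F)"

lemma edge_count_empty [simp]: "edge_count e {#} = 0"
  unfolding edge_count_def by simp

lemma edge_count_add_mset [simp]:
  "edge_count e (add_mset S F) = (if e \<in> snd S then 1 else 0) + edge_count e F"
  unfolding edge_count_def by simp

lemma edge_count_union [simp]: "edge_count e (F + G) = edge_count e F + edge_count e G"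
  unfolding edge_count_def by simp

lemma edge_count_image_mset:
  assumes "\<forall>S\<in>#F. e \<in> snd (f S) \<longleftrightarrow> e \<in> snd S"
  shows "edge_count e (image_mset f F) = edge_count e F"
proof -
  have "filter_mset (\<lambda>S. e \<in> snd (f S)) F = filter_mset (\<lambda>S. e \<in> snd S) F"
    using assms by (intro filter_mset_cong0) auto
  then show ?thesis unfolding edge_count_def by (simp add: filter_mset_image_mset)
qed

lemma edge_count_eq_size: "\<forall>S\<in>#F. e \<in> snd S \<Longrightarrow> edge_count e F = size F"
  unfolding edge_count_def by (metis filter_mset_True filter_mset_cong0)

lemma edge_count_eq_0: "\<forall>S\<in>#F. e \<notin> snd S \<Longrightarrow> edge_count e F = 0"
  unfolding edge_count_def by (metis filter_mset_False filter_mset_cong0 size_empty)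

lemma edge_count_eq_sizeD:
  assumes "edge_count e F = size F" "S \<in># F"
  shows "e \<in> snd S"
proof (rule ccontr)
  assume "e \<notin> snd S"
  moreover obtain F' where "F = add_mset S F'" using assms(2) by (metis multi_member_split)
  moreover have "edge_count e F' \<le> size F'" unfolding edge_count_def by simp
  ultimately show False using assms(1) by simp
qed

lemma six_cover_iff:
  "six_cover ends V E F \<longleftrightarrow> (\<forall>S\<in>#F. is_subgraph ends V E S) \<and> (\<forall>e\<in>E. edge_count e F = 6)"
  unfolding six_cover_def edge_count_def by simp

lemma prod_sig_pm1:
  assumes "finite A" "\<forall>e\<in>A. sig e \<in> {1, -1::int}"
  shows "(\<Prod>e\<in>A. sig e) \<in> {1, -1}"
  using assms by (induction A rule: finite_induct) auto

lemma sg_sign_union: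
  assumes "finite (snd P)" "finite (snd Q)" "snd P \<inter> snd Q = {}"
  shows "sg_sign sig (sg_union P Q) = sg_sign sig P * sg_sign sig Q"
  using assms unfolding sg_sign_def sg_union_def by (simp add: prod.union_disjoint)

lemma is_circuit_edge_ends: "is_circuit ends C \<Longrightarrow> e \<in> snd C \<Longrightarrow> ends e \<subseteq> fst C"
  unfolding is_circuit_def sg_connected_def by blast

lemma is_circuit_vertex_incident:
  assumes "is_circuit ends C" "v \<in> fst C"
  obtains e where "e \<in> snd C" "v \<in> ends e"
proof -
  have "sg_deg ends (snd C) v = 2" using assms unfolding is_circuit_def by auto
  then have "{e\<in>snd C. v \<in> ends e \<and> card (ends e) = 2} \<noteq> {} \<or> {e\<in>snd C. ends e = {v}} \<noteq> {}"
    unfolding sg_deg_def by (metis add_cancel_right_left card.empty mult_zero_right zero_neq_numeral)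
  then show ?thesis using that by auto
qed

lemma is_circuit_vertices_subset:
  assumes "is_circuit ends C" "\<forall>e\<in>snd C. ends e \<subseteq> W"
  shows "fst C \<subseteq> W"
proof
  fix v assume "v \<in> fst C"
  then obtain e where "e \<in> snd C" "v \<in> ends e" using is_circuit_vertex_incident[OF assms(1)] by blast
  then show "v \<in> W" using assms(2) by blast
qed

lemma is_circuit_edges_nonempty:
  assumes "is_circuit ends C" shows "snd C \<noteq> {}"
proof -
  obtain v where "v \<in> fst C" using assms unfolding is_circuit_def sg_connected_def by auto
  then show ?thesis using is_circuit_vertex_incident[OF assms] by blast
qed

lemma is_tadpole_start: "is_tadpole ends sig x T \<Longrightarrow> x \<in> fst T"
  unfolding is_tadpole_def sg_union_def using is_path_terminals(1) by fastforce

lemma is_tadpole_prepend_path: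
  assumes P: "is_path ends a x P" and T: "is_tadpole ends sig x T" and meet: "fst P \<inter> fst T = {x}"
  shows "is_tadpole ends sig a (sg_union P T)"
proof -
  obtain y Q C where Q: "is_path ends x y Q" and C: "is_circuit ends C" "\<not> balanced sig C"
    and QC: "fst Q \<inter> fst C = {y}" and T_eq: "T = sg_union Q C"
    using T unfolding is_tadpole_def by blast
  have "x \<in> fst Q" using is_path_terminals(1)[OF Q] .
  then have "fst P \<inter> fst Q = {x}" using meet T_eq unfolding sg_union_def by auto
  then have "is_path ends a y (sg_union P Q)" using is_path_append[OF P Q] by simp
  moreover have "fst (sg_union P Q) \<inter> fst C = {y}"
    using meet QC \<open>x \<in> fst Q\<close> T_eq unfolding sg_union_def by auto
  moreover have "sg_union P T = sg_union (sg_union P Q) C" using T_eq unfolding sg_union_def by auto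
  ultimately show ?thesis unfolding is_tadpole_def using C by blast
qed

lemma is_barbell_tadpole_union:
  assumes T1: "is_tadpole ends sig b T1" and T2: "is_tadpole ends sig b T2"
    and meet: "fst T1 \<inter> fst T2 = {b}" and edisj: "snd T1 \<inter> snd T2 = {}"
  shows "is_barbell ends sig (sg_union T1 T2)"
proof -
  obtain y1 Q1 C1 where Q1: "is_path ends b y1 Q1" and C1: "is_circuit ends C1" "\<not> balanced sig C1"
    and QC1: "fst Q1 \<inter> fst C1 = {y1}" and T1_eq: "T1 = sg_union Q1 C1"
    using T1 unfolding is_tadpole_def by blast
  obtain y2 Q2 C2 where Q2: "is_path ends b y2 Q2" and C2: "is_circuit ends C2" "\<not> balanced sig C2"
    and QC2: "fst Q2 \<inter> fst C2 = {y2}" and T2_eq: "T2 = sg_union Q2 C2"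
    using T2 unfolding is_tadpole_def by blast
  have b: "b \<in> fst Q1" "b \<in> fst Q2" using is_path_terminals(1)[OF Q1] is_path_terminals(1)[OF Q2] .
  have meet': "(fst Q1 \<union> fst C1) \<inter> (fst Q2 \<union> fst C2) \<subseteq> {b}"
    using meet T1_eq T2_eq unfolding sg_union_def by auto
  have "C1 \<noteq> C2"
  proof
    assume "C1 = C2"
    then have "snd C1 \<subseteq> snd T1 \<inter> snd T2" using T1_eq T2_eq unfolding sg_union_def by auto
    then show False using edisj is_circuit_edges_nonempty[OF C1(1)] by auto
  qed
  show ?thesis
  proof (cases "y1 = b \<and> y2 = b")
    case True
    then have Q: "Q1 = ({b}, {})" "Q2 = ({b}, {})" using is_path_trivial Q1 Q2 by metis+
    then have "b \<in> fst C1" "b \<in> fst C2" using QC1 QC2 True by auto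
    then have "fst C1 \<inter> fst C2 = {b}" using meet' by blast
    moreover have "sg_union T1 T2 = sg_union (sg_union C1 C2) ({b}, {})"
      using Q \<open>b \<in> fst C1\<close> T1_eq T2_eq unfolding sg_union_def by auto
    ultimately show ?thesis
      unfolding is_barbell_def using C1 C2 \<open>C1 \<noteq> C2\<close>
      by (intro exI[of _ C1] exI[of _ C2] exI[of _ "({b}, {})"]) auto
  next
    case False
    have "fst Q1 \<inter> fst Q2 = {b}" using meet' b by blast
    then have "is_path ends y1 y2 (sg_union Q1 Q2)" using is_path_append[OF is_path_rev[OF Q1] Q2] by simp
    moreover have "fst C1 \<inter> fst C2 = {}" using False meet' QC1 QC2 b by blast
    moreover have "fst (sg_union Q1 Q2) \<inter> (fst C1 \<union> fst C2) = {y1, y2}"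
      using QC1 QC2 meet' b unfolding sg_union_def by (simp only: fst_conv) blast
    moreover have "y1 \<in> fst C1" "y2 \<in> fst C2" using QC1 QC2 by auto
    moreover have "sg_union T1 T2 = sg_union (sg_union C1 C2) (sg_union Q1 Q2)"
      using T1_eq T2_eq unfolding sg_union_def by auto
    ultimately show ?thesis
      unfolding is_barbell_def using C1 C2 \<open>C1 \<noteq> C2\<close>
      by (intro exI[of _ C1] exI[of _ C2] exI[of _ "sg_union Q1 Q2"]) auto
  qed
qed


lemma is_subgraph_mono:
  "is_subgraph ends V E S \<Longrightarrow> V \<subseteq> V' \<Longrightarrow> E \<subseteq> E' \<Longrightarrow> is_subgraph ends V' E' S"
  unfolding is_subgraph_def by auto

lemma is_subgraph_union:
  "is_subgraph ends V E A \<Longrightarrow> is_subgraph ends V' E' B \<Longrightarrow>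
    is_subgraph ends (V \<union> V') (E \<union> E') (sg_union A B)"
  unfolding is_subgraph_def sg_union_def by auto

lemma is_path_subgraph: "is_path ends x y P \<Longrightarrow> is_subgraph ends (fst P) (snd P) P"
  unfolding is_subgraph_def using is_path_edge_ends(1)[of ends x y P] by blast

section \<open>Psi(2)-covers\<close>

lemma psi_coverD:
  assumes "psi_cover ends sig V E x y 2 Pp Pn Tx Ty Cs"
  shows "x \<in> V" "y \<in> V" "x \<noteq> y" "six_cover ends V E (Pp + Pn + Tx + Ty + Cs)"
    "size Pp = 2" "size Pn = 2" "size Tx = 2" "size Ty = 2"
    "\<forall>T\<in>#Tx. is_tadpole ends sig x T" "\<forall>T\<in>#Ty. is_tadpole ends sig y T"
    "\<forall>C\<in>#Cs. signed_circuit ends sig C"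
    "\<forall>P\<in>#Pp. is_path ends x y P \<and> sg_sign sig P = 1" "\<forall>P\<in>#Pn. is_path ends x y P \<and> sg_sign sig P = -1"
  using assms unfolding psi_cover_def by simp_all

lemma psi_coverI:
  assumes "x \<in> V" "y \<in> V" "x \<noteq> y" "six_cover ends V E (Pp + Pn + Tx + Ty + Cs)"
    "size Pp = 2" "size Pn = 2" "size Tx = 2" "size Ty = 2"
    "\<forall>T\<in>#Tx. is_tadpole ends sig x T" "\<forall>T\<in>#Ty. is_tadpole ends sig y T"
    "\<forall>C\<in>#Cs. signed_circuit ends sig C"
    "\<forall>P\<in>#Pp. is_path ends x y P \<and> sg_sign sig P = 1" "\<forall>P\<in>#Pn. is_path ends x y P \<and> sg_sign sig P = -1"
  shows "psi_cover ends sig V E x y 2 Pp Pn Tx Ty Cs"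
  using assms unfolding psi_cover_def by simp_all

lemma six_coverD:
  assumes "six_cover ends V E F"
  shows "\<forall>S\<in>#F. is_subgraph ends V E S" "\<forall>e\<in>E. edge_count e F = 6"
  using assms unfolding six_cover_iff by simp_all

lemma psi_cover_member:
  assumes "psi_cover ends sig V E x y 2 Pp Pn Tx Ty Cs" "S \<in># Pp + Pn + Tx + Ty + Cs"
  shows "fst S \<subseteq> V" "snd S \<subseteq> E" "is_subgraph ends V E S"
  using six_coverD(1)[OF psi_coverD(4)[OF assms(1)]] assms(2) unfolding is_subgraph_def by auto

lemma psi_cover_swap:
  assumes "psi_cover ends sig V E x y 2 Pp Pn Tx Ty Cs"
  shows "psi_cover ends sig V E y x 2 Pp Pn Ty Tx Cs"
proof -
  note h = psi_coverD[OF assms]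
  have "Pp + Pn + Ty + Tx + Cs = Pp + Pn + Tx + Ty + Cs" by (simp add: add_ac)
  then have "six_cover ends V E (Pp + Pn + Ty + Tx + Cs)" using h(4) by metis
  moreover have "\<forall>P\<in>#Pp. is_path ends y x P \<and> sg_sign sig P = 1"
    "\<forall>P\<in>#Pn. is_path ends y x P \<and> sg_sign sig P = -1"
    using h(12,13) is_path_rev[of ends x y] by auto
  ultimately show ?thesis using h by (intro psi_coverI) auto
qed

text \<open>If \<open>f\<close> multiplies all path signs by \<open>-1\<close>, the positive and negative paths trade places.\<close>

lemma psi_cover_replace_source:
  assumes H: "psi_cover ends sig V E x y 2 Pp Pn Tx Ty Cs"
    and x': "x' \<in> V'" "y \<in> V'" "x' \<noteq> y" and s: "s \<in> {1, -1}"
    and paths: "\<And>Q. Q \<in># Pp + Pn \<Longrightarrow> is_path ends x' y (f Q) \<and> sg_sign sig (f Q) = s * sg_sign sig Q"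
    and tadpoles: "\<And>T. T \<in># Tx \<Longrightarrow> is_tadpole ends sig x' (f T)"
    and cover: "six_cover ends V' E' (image_mset f (Pp + Pn + Tx) + Ty + Cs)"
  shows "\<exists>Pp' Pn'. psi_cover ends sig V' E' x' y 2 Pp' Pn' (image_mset f Tx) Ty Cs"
proof -
  note h = psi_coverD[OF H]
  define Pp' where "Pp' = image_mset f (if s = 1 then Pp else Pn)"
  define Pn' where "Pn' = image_mset f (if s = 1 then Pn else Pp)"
  have "Pp' + Pn' + image_mset f Tx + Ty + Cs = image_mset f (Pp + Pn + Tx) + Ty + Cs"
    unfolding Pp'_def Pn'_def by (simp add: add_ac)
  then have "six_cover ends V' E' (Pp' + Pn' + image_mset f Tx + Ty + Cs)" using cover by simp
  moreover have "size Pp' = 2" "size Pn' = 2" "size (image_mset f Tx) = 2"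
    using h(5-7) by (simp_all add: Pp'_def Pn'_def)
  moreover have "\<forall>P\<in>#Pp'. is_path ends x' y P \<and> sg_sign sig P = 1"
    "\<forall>P\<in>#Pn'. is_path ends x' y P \<and> sg_sign sig P = -1"
  proof -
    have "sg_sign sig (f Q) = s" if "Q \<in># Pp" for Q using paths[of Q] h(12) that by simp
    moreover have "sg_sign sig (f Q) = - s" if "Q \<in># Pn" for Q using paths[of Q] h(13) that by simp
    moreover have "is_path ends x' y (f Q)" if "Q \<in># Pp + Pn" for Q using paths[OF that] by simp
    ultimately show "\<forall>P\<in>#Pp'. is_path ends x' y P \<and> sg_sign sig P = 1"
      "\<forall>P\<in>#Pn'. is_path ends x' y P \<and> sg_sign sig P = -1"
      using s unfolding Pp'_def Pn'_def by (auto split: if_splits)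
  qed
  moreover have "\<forall>T\<in>#image_mset f Tx. is_tadpole ends sig x' T" using tadpoles by simp
  ultimately have "psi_cover ends sig V' E' x' y 2 Pp' Pn' (image_mset f Tx) Ty Cs"
    using x' h(8,10,11) by (intro psi_coverI) simp_all
  then show ?thesis by blast
qed

lemma psi_cover_prepend_path:
  assumes P: "is_path ends a b P" and H: "psi_cover ends sig V E b c 2 Pp Pn Tx Ty Cs"
    and meet: "fst P \<inter> V = {b}" and edisj: "snd P \<inter> E = {}"
    and signs: "\<forall>e\<in>snd P. sig e \<in> {1, -1}"
  shows "\<exists>Pp' Pn'. psi_cover ends sig (fst P \<union> V) (snd P \<union> E) a c 2 Pp' Pn'
           (image_mset (sg_union P) Tx) Ty Cs"
proof (rule psi_cover_replace_source[OF H])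
  note h = psi_coverD[OF H]
  have meet_member: "fst P \<inter> fst S = {b}" if "S \<in># Pp + Pn + Tx + Ty + Cs" "b \<in> fst S" for S
    using psi_cover_member(1)[OF H that(1)] that(2) meet by blast
  show "a \<in> fst P \<union> V" "c \<in> fst P \<union> V" "a \<noteq> c"
    using is_path_terminals(1)[OF P] h(2,3) meet by auto
  show "sg_sign sig P \<in> {1, -1}"
    unfolding sg_sign_def using prod_sig_pm1 is_path_finite_edges[OF P] signs by blast
  show "is_path ends a c (sg_union P Q) \<and> sg_sign sig (sg_union P Q) = sg_sign sig P * sg_sign sig Q"
    if Q: "Q \<in># Pp + Pn" for Q
  proof -
    have path: "is_path ends b c Q" using Q h(12,13) by auto
    have "snd Q \<subseteq> E" using Q by (intro psi_cover_member(2)[OF H]) simp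
    then have "snd P \<inter> snd Q = {}" using edisj by blast
    then show ?thesis
      using is_path_append[OF P path] meet_member[OF _ is_path_terminals(1)[OF path]] Q
        sg_sign_union[OF is_path_finite_edges[OF P] is_path_finite_edges[OF path]] by auto
  qed
  show "is_tadpole ends sig a (sg_union P T)" if T: "T \<in># Tx" for T
  proof -
    have tadpole: "is_tadpole ends sig b T" using T h(9) by simp
    moreover have "fst P \<inter> fst T = {b}" using meet_member[OF _ is_tadpole_start[OF tadpole]] T by simp
    ultimately show ?thesis using is_tadpole_prepend_path[OF P] by blast
  qed
  have "\<forall>S\<in>#image_mset (sg_union P) (Pp + Pn + Tx) + Ty + Cs. is_subgraph ends (fst P \<union> V) (snd P \<union> E) S"
    using six_coverD(1)[OF h(4)] is_subgraph_union[OF is_path_subgraph[OF P]]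
      is_subgraph_mono[of ends V E _ "fst P \<union> V" "snd P \<union> E"] by auto
  moreover have "edge_count e (image_mset (sg_union P) (Pp + Pn + Tx) + Ty + Cs) = 6"
    if e: "e \<in> snd P \<union> E" for e
  proof (cases "e \<in> snd P")
    case True
    then have "edge_count e (Ty + Cs) = 0"
      using psi_cover_member(2)[OF H] edisj by (intro edge_count_eq_0) fastforce
    moreover have "edge_count e (image_mset (sg_union P) (Pp + Pn + Tx)) = 6"
      using True h(5-7) by (subst edge_count_eq_size) (auto simp: sg_union_def)
    ultimately show ?thesis by simp
  next
    case False
    then have "edge_count e (image_mset (sg_union P) (Pp + Pn + Tx)) = edge_count e (Pp + Pn + Tx)"
      by (intro edge_count_image_mset) (auto simp: sg_union_def)
    then show ?thesis using six_coverD(2)[OF h(4)] e False by simp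
  qed
  ultimately show "six_cover ends (fst P \<union> V) (snd P \<union> E) (image_mset (sg_union P) (Pp + Pn + Tx) + Ty + Cs)"
    unfolding six_cover_iff by blast
qed

lemma psi_cover_append_path:
  assumes H: "psi_cover ends sig V E a b 2 Pp Pn Tx Ty Cs" and P: "is_path ends b c P"
    and meet: "fst P \<inter> V = {b}" and edisj: "snd P \<inter> E = {}"
    and signs: "\<forall>e\<in>snd P. sig e \<in> {1, -1}"
  shows "\<exists>Pp' Pn'. psi_cover ends sig (V \<union> fst P) (E \<union> snd P) a c 2 Pp' Pn'
           Tx (image_mset (sg_union P) Ty) Cs"
  using psi_cover_prepend_path[OF is_path_rev[OF P] psi_cover_swap[OF H] meet edisj signs]
    psi_cover_swap by (metis sup_commute)

lemma edge_count_map2_union: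
  assumes "length xs = length ys" "(\<forall>P\<in>set xs. e \<notin> snd P) \<or> (\<forall>Q\<in>set ys. e \<notin> snd Q)"
  shows "edge_count e (mset (map2 sg_union xs ys)) = edge_count e (mset xs) + edge_count e (mset ys)"
  using assms by (induction xs ys rule: list_induct2) (auto simp: sg_union_def)

lemma six_cover_join:
  assumes F1: "six_cover ends V1 E1 (mset xs + R1)" and F2: "six_cover ends V2 E2 (mset ys + R2)"
    and len: "length xs = length ys" and edisj: "E1 \<inter> E2 = {}"
  shows "six_cover ends (V1 \<union> V2) (E1 \<union> E2) (mset (map2 sg_union xs ys) + R1 + R2)"
  unfolding six_cover_iff
proof (intro conjI ballI)
  note sub1 = six_coverD(1)[OF F1] and sub2 = six_coverD(1)[OF F2]
  fix S assume "S \<in># mset (map2 sg_union xs ys) + R1 + R2"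
  then consider P Q where "P \<in> set xs" "Q \<in> set ys" "S = sg_union P Q" | "S \<in># R1" | "S \<in># R2"
  proof (elim union_iff[THEN iffD1, elim_format] disjE)
    assume "S \<in># mset (map2 sg_union xs ys)"
    then obtain P Q where PQ: "(P, Q) \<in> set (zip xs ys)" "S = sg_union P Q" by auto
    then show thesis using that(1) set_zip_leftD[OF PQ(1)] set_zip_rightD[OF PQ(1)] by blast
  qed (use that in blast)+
  then show "is_subgraph ends (V1 \<union> V2) (E1 \<union> E2) S"
  proof cases
    case 1
    then show ?thesis using is_subgraph_union[of ends V1 E1 P V2 E2 Q] sub1 sub2 by simp
  next
    case 2
    then show ?thesis using is_subgraph_mono[of ends V1 E1 S] sub1 by simp
  next
    case 3
    then show ?thesis using is_subgraph_mono[of ends V2 E2 S] sub2 by simp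
  qed
next
  fix e assume e: "e \<in> E1 \<union> E2"
  note sub1 = six_coverD(1)[OF F1] and sub2 = six_coverD(1)[OF F2]
  have avoid1: "\<forall>S\<in>#mset xs + R1. e \<notin> snd S" if "e \<notin> E1"
    using sub1 that unfolding is_subgraph_def by blast
  have avoid2: "\<forall>S\<in>#mset ys + R2. e \<notin> snd S" if "e \<notin> E2"
    using sub2 that unfolding is_subgraph_def by blast
  consider "e \<in> E1" "e \<notin> E2" | "e \<in> E2" "e \<notin> E1" using e edisj by blast
  then show "edge_count e (mset (map2 sg_union xs ys) + R1 + R2) = 6"
  proof cases
    case 1
    then have "edge_count e (mset ys + R2) = 0" using avoid2 by (intro edge_count_eq_0) simp
    moreover have "edge_count e (mset (map2 sg_union xs ys)) = edge_count e (mset xs) + edge_count e (mset ys)"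
      using 1 avoid2 by (intro edge_count_map2_union[OF len]) simp
    ultimately show ?thesis using six_coverD(2)[OF F1] 1 by simp
  next
    case 2
    then have "edge_count e (mset xs + R1) = 0" using avoid1 by (intro edge_count_eq_0) simp
    moreover have "edge_count e (mset (map2 sg_union xs ys)) = edge_count e (mset xs) + edge_count e (mset ys)"
      using 2 avoid1 by (intro edge_count_map2_union[OF len]) simp
    ultimately show ?thesis using six_coverD(2)[OF F2] 2 by simp
  qed
qed

lemma is_path_append_across:
  assumes Q1: "is_path ends a b Q1" "fst Q1 \<subseteq> V1" "snd Q1 \<subseteq> E1"
    and Q2: "is_path ends b c Q2" "fst Q2 \<subseteq> V2" "snd Q2 \<subseteq> E2"
    and meet: "V1 \<inter> V2 = {b}" and edisj: "E1 \<inter> E2 = {}"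
  shows "is_path ends a c (sg_union Q1 Q2)"
    "sg_sign sig (sg_union Q1 Q2) = sg_sign sig Q1 * sg_sign sig Q2"
proof -
  have "fst Q1 \<inter> fst Q2 = {b}"
    using Q1(2) Q2(2) meet is_path_terminals(2)[OF Q1(1)] is_path_terminals(1)[OF Q2(1)] by auto
  then show "is_path ends a c (sg_union Q1 Q2)" using is_path_append[OF Q1(1) Q2(1)] by simp
  have "snd Q1 \<inter> snd Q2 = {}" using Q1(3) Q2(3) edisj by auto
  then show "sg_sign sig (sg_union Q1 Q2) = sg_sign sig Q1 * sg_sign sig Q2"
    using sg_sign_union[OF is_path_finite_edges[OF Q1(1)] is_path_finite_edges[OF Q2(1)]] by blast
qed

lemma is_barbell_tadpole_union_across:
  assumes T1: "is_tadpole ends sig b T1" "fst T1 \<subseteq> V1" "snd T1 \<subseteq> E1"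
    and T2: "is_tadpole ends sig b T2" "fst T2 \<subseteq> V2" "snd T2 \<subseteq> E2"
    and meet: "V1 \<inter> V2 = {b}" and edisj: "E1 \<inter> E2 = {}"
  shows "is_barbell ends sig (sg_union T1 T2)"
proof (rule is_barbell_tadpole_union[OF T1(1) T2(1)])
  show "fst T1 \<inter> fst T2 = {b}"
    using T1(2) T2(2) meet is_tadpole_start[OF T1(1)] is_tadpole_start[OF T2(1)] by auto
  show "snd T1 \<inter> snd T2 = {}" using T1(3) T2(3) edisj by auto
qed

text \<open>Positive paths are obtained by joining paths of equal signs, negative paths by joining paths of
  opposite signs, and the tadpoles at the common terminal pair up into barbells.\<close>

lemma psi_cover_series:
  assumes H1: "psi_cover ends sig V1 E1 a b 2 Pp1 Pn1 Tx1 Ty1 Cs1"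
    and H2: "psi_cover ends sig V2 E2 b c 2 Pp2 Pn2 Tx2 Ty2 Cs2"
    and meet: "V1 \<inter> V2 = {b}" and edisj: "E1 \<inter> E2 = {}"
  shows "\<exists>Pp Pn Cs. psi_cover ends sig (V1 \<union> V2) (E1 \<union> E2) a c 2 Pp Pn Tx1 Ty2 Cs"
proof -
  note h1 = psi_coverD[OF H1] and h2 = psi_coverD[OF H2]
  obtain p1 p2 where p: "Pp1 = {#p1, p2#}" using size_mset_2E[OF h1(5)] .
  obtain n1 n2 where n: "Pn1 = {#n1, n2#}" using size_mset_2E[OF h1(6)] .
  obtain t1 t2 where t: "Ty1 = {#t1, t2#}" using size_mset_2E[OF h1(8)] .
  obtain q1 q2 where q: "Pp2 = {#q1, q2#}" using size_mset_2E[OF h2(5)] .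
  obtain m1 m2 where m: "Pn2 = {#m1, m2#}" using size_mset_2E[OF h2(6)] .
  obtain s1 s2 where s: "Tx2 = {#s1, s2#}" using size_mset_2E[OF h2(7)] .
  have in1: "fst S \<subseteq> V1" "snd S \<subseteq> E1" if "S \<in># Pp1 + Pn1 + Tx1 + Ty1 + Cs1" for S
    using psi_cover_member[OF H1 that] by auto
  have in2: "fst S \<subseteq> V2" "snd S \<subseteq> E2" if "S \<in># Pp2 + Pn2 + Tx2 + Ty2 + Cs2" for S
    using psi_cover_member[OF H2 that] by auto
  have join: "is_path ends a c (sg_union P Q)" "sg_sign sig (sg_union P Q) = sg_sign sig P * sg_sign sig Q"
    if "P \<in># Pp1 + Pn1" "Q \<in># Pp2 + Pn2" for P Q
  proof -
    have "is_path ends a b P" "is_path ends b c Q" using that h1(12,13) h2(12,13) by auto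
    moreover have "P \<in># Pp1 + Pn1 + Tx1 + Ty1 + Cs1" "Q \<in># Pp2 + Pn2 + Tx2 + Ty2 + Cs2" using that by auto
    ultimately show "is_path ends a c (sg_union P Q)" "sg_sign sig (sg_union P Q) = sg_sign sig P * sg_sign sig Q"
      using is_path_append_across[OF _ in1(1,2) _ in2(1,2) meet edisj] by blast+
  qed
  have sign: "sg_sign sig p1 = 1" "sg_sign sig p2 = 1" "sg_sign sig n1 = -1" "sg_sign sig n2 = -1"
    "sg_sign sig q1 = 1" "sg_sign sig q2 = 1" "sg_sign sig m1 = -1" "sg_sign sig m2 = -1"
    using h1(12,13) h2(12,13) p n q m by auto
  have barbell: "is_barbell ends sig (sg_union T U)" if "T \<in># Ty1" "U \<in># Tx2" for T U
  proof -
    have "T \<in># Pp1 + Pn1 + Tx1 + Ty1 + Cs1" "U \<in># Pp2 + Pn2 + Tx2 + Ty2 + Cs2" using that by auto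
    then show ?thesis
      using is_barbell_tadpole_union_across[OF _ in1(1,2) _ in2(1,2) meet edisj] h1(10) h2(9) that by blast
  qed
  define Pp where "Pp = {#sg_union p1 q1, sg_union n1 m1#}"
  define Pn where "Pn = {#sg_union p2 m2, sg_union n2 q2#}"
  define Cs where "Cs = Cs1 + Cs2 + {#sg_union t1 s1, sg_union t2 s2#}"
  have members: "mset [p1, n1, p2, n2, t1, t2] + (Tx1 + Cs1) = Pp1 + Pn1 + Tx1 + Ty1 + Cs1"
    "mset [q1, m1, m2, q2, s1, s2] + (Ty2 + Cs2) = Pp2 + Pn2 + Tx2 + Ty2 + Cs2"
    "mset (map2 sg_union [p1, n1, p2, n2, t1, t2] [q1, m1, m2, q2, s1, s2]) + (Tx1 + Cs1) + (Ty2 + Cs2)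
       = Pp + Pn + Tx1 + Ty2 + Cs"
    unfolding p n t q m s Pp_def Pn_def Cs_def by (simp_all add: union_ac)
  have "six_cover ends (V1 \<union> V2) (E1 \<union> E2) (Pp + Pn + Tx1 + Ty2 + Cs)"
    using six_cover_join[of ends V1 E1 "[p1, n1, p2, n2, t1, t2]" "Tx1 + Cs1"
        V2 E2 "[q1, m1, m2, q2, s1, s2]" "Ty2 + Cs2", unfolded members]
      h1(4) h2(4) edisj by simp
  moreover have "\<forall>C\<in>#Cs. signed_circuit ends sig C"
    unfolding Cs_def signed_circuit_def using h1(11) h2(11) barbell t s by (auto simp: signed_circuit_def)
  moreover have "\<forall>P\<in>#Pp. is_path ends a c P \<and> sg_sign sig P = 1"
    "\<forall>P\<in>#Pn. is_path ends a c P \<and> sg_sign sig P = -1"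
    unfolding Pp_def Pn_def using join[of p1 q1] join[of n1 m1] join[of p2 m2] join[of n2 q2] sign p n q m
    by simp_all
  ultimately have "psi_cover ends sig (V1 \<union> V2) (E1 \<union> E2) a c 2 Pp Pn Tx1 Ty2 Cs"
    using h1(1,3,7,9) h2(2,3,8,10) meet by (intro psi_coverI) (auto simp: Pp_def Pn_def)
  then show ?thesis by blast
qed

section \<open>Circuits cross every cut an even number of times\<close>

lemma even_sum_iff_even_card_ones:
  assumes "finite F" "\<forall>e\<in>F. c e \<le> (2::nat)"
  shows "even (\<Sum>e\<in>F. c e) \<longleftrightarrow> even (card {e\<in>F. c e = 1})"
  using assms
proof (induction F rule: finite_induct)
  case (insert x F)
  have "{e\<in>insert x F. c e = 1} = (if c x = 1 then insert x {e\<in>F. c e = 1} else {e\<in>F. c e = 1})"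
    by auto
  moreover have "x \<notin> {e\<in>F. c e = 1}" "finite {e\<in>F. c e = 1}" "c x \<le> 2" using insert by auto
  ultimately show ?case using insert by (cases "c x"; cases "c x - 1"; auto)
qed simp

lemma sum_card_incident:
  assumes "finite F" "finite W"
  shows "(\<Sum>v\<in>W. card {e\<in>F. v \<in> ends e \<and> P e}) = (\<Sum>e\<in>{e\<in>F. P e}. card (ends e \<inter> W))"
proof -
  have "card {e\<in>F. v \<in> ends e \<and> P e} = (\<Sum>e\<in>{e\<in>F. P e}. if v \<in> ends e then 1 else 0)" for v
  proof -
    have "{e\<in>F. v \<in> ends e \<and> P e} = {e\<in>{e\<in>F. P e}. v \<in> ends e}" by auto
    then show ?thesis using sum.inter_filter[of "{e\<in>F. P e}" "\<lambda>_. 1::nat"] assms(1) by simp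
  qed
  moreover have "card (ends e \<inter> W) = (\<Sum>v\<in>W. if v \<in> ends e then 1 else 0)" for e
  proof -
    have "ends e \<inter> W = {v\<in>W. v \<in> ends e}" by auto
    then show ?thesis using sum.inter_filter[OF assms(2), of "\<lambda>_. 1::nat"] by simp
  qed
  ultimately show ?thesis using sum.swap[of "\<lambda>v e. if v \<in> ends e then 1 else (0::nat)" "{e\<in>F. P e}" W] by simp
qed

text \<open>Double counting the degrees (all equal to \<open>2\<close>) of the circuit vertices in \<open>L\<close>: an edge with
  both ends in \<open>L\<close> or a loop contributes \<open>2\<close>, so the edges leaving \<open>L\<close> must be even in number.\<close>

lemma circuit_cut_even:
  assumes C: "is_circuit ends C" and fin: "finite (snd C)" "finite (fst C)"
  shows "even (card {e\<in>snd C. card (ends e) = 2 \<and> card (ends e \<inter> L) = 1})"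
proof -
  define W where "W = fst C \<inter> L"
  define F2 where "F2 = {e\<in>snd C. card (ends e) = 2}"
  have "even (\<Sum>v\<in>W. sg_deg ends (snd C) v)"
    using C unfolding is_circuit_def W_def by (simp add: sum.neutral)
  then have "even (\<Sum>v\<in>W. card {e\<in>snd C. v \<in> ends e \<and> card (ends e) = 2})"
    unfolding sg_deg_def by (simp add: sum.distrib sum_distrib_left[symmetric])
  moreover have "finite W" using fin(2) unfolding W_def by simp
  ultimately have "even (\<Sum>e\<in>F2. card (ends e \<inter> W))"
    using sum_card_incident[OF fin(1), of W ends "\<lambda>e. card (ends e) = 2"] unfolding F2_def by simp
  moreover have "ends e \<inter> W = ends e \<inter> L" if "e \<in> F2" for e
    using is_circuit_edge_ends[OF C] that unfolding W_def F2_def by auto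
  ultimately have "even (\<Sum>e\<in>F2. card (ends e \<inter> L))" by simp
  moreover have "card (ends e \<inter> L) \<le> 2" if "e \<in> F2" for e
    using that card_mono[of "ends e" "ends e \<inter> L"] card.infinite[of "ends e"] unfolding F2_def by fastforce
  ultimately have "even (card {e\<in>F2. card (ends e \<inter> L) = 1})"
    using even_sum_iff_even_card_ones[of F2] fin(1) unfolding F2_def by simp
  moreover have "{e\<in>F2. card (ends e \<inter> L) = 1} = {e\<in>snd C. card (ends e) = 2 \<and> card (ends e \<inter> L) = 1}"
    unfolding F2_def by auto
  ultimately show ?thesis by simp
qed

lemma circuit_crossing_edge_not_unique:
  assumes C: "is_circuit ends C" "finite (snd C)" "finite (fst C)"
    and e: "e \<in> snd C" "card (ends e) = 2" "card (ends e \<inter> L) = 1"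
  obtains f where "f \<in> snd C" "f \<noteq> e" "card (ends f) = 2" "card (ends f \<inter> L) = 1"
proof (rule ccontr)
  assume "\<not> thesis"
  then have "{f\<in>snd C. card (ends f) = 2 \<and> card (ends f \<inter> L) = 1} = {e}" using that e by auto
  then show False using circuit_cut_even[OF C, of L] by simp
qed

section \<open>Restricting a cover to an attached part\<close>

lemma is_subgraph_inside:
  "is_subgraph ends V E M \<Longrightarrow> fst M \<subseteq> S \<Longrightarrow> is_subgraph ends S {e\<in>E. ends e \<subseteq> S} M"
  unfolding is_subgraph_def by blast

lemma is_tadpole_inside_attached:
  assumes A: "attached_at ends E S c" and circ: "\<forall>C. is_circuit ends C \<and> snd C \<subseteq> E \<longrightarrow> fst C \<subseteq> S"
    and T: "is_tadpole ends sig y T" "snd T \<subseteq> E" and y: "y \<in> S"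
  shows "fst T \<subseteq> S"
proof -
  obtain z Q C where Q: "is_path ends y z Q" and C: "is_circuit ends C"
    and QC: "fst Q \<inter> fst C = {z}" and T_eq: "T = sg_union Q C"
    using T(1) unfolding is_tadpole_def by blast
  have "snd Q \<subseteq> E" "snd C \<subseteq> E" using T(2) T_eq unfolding sg_union_def by auto
  then have "fst C \<subseteq> S" using circ C by blast
  then have "fst Q \<subseteq> S" using attached_at_path_inside[OF A Q \<open>snd Q \<subseteq> E\<close> y] QC by blast
  then show ?thesis using \<open>fst C \<subseteq> S\<close> T_eq unfolding sg_union_def by auto
qed

lemma signed_circuit_inside_attached:
  assumes A: "attached_at ends E S c" and circ: "\<forall>C. is_circuit ends C \<and> snd C \<subseteq> E \<longrightarrow> fst C \<subseteq> S"
    and M: "signed_circuit ends sig M" "snd M \<subseteq> E"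
  shows "fst M \<subseteq> S"
proof (cases "is_circuit ends M")
  case True then show ?thesis using circ M(2) by blast
next
  case False
  then have "is_barbell ends sig M" using M(1) unfolding signed_circuit_def by blast
  then obtain C1 C2 P where C: "is_circuit ends C1" "is_circuit ends C2" "C1 \<noteq> C2"
      "\<not> balanced sig C1" "\<not> balanced sig C2"
    and M_eq: "M = sg_union (sg_union C1 C2) P"
    and P: "(\<exists>u. P = ({u}, {}) \<and> fst C1 \<inter> fst C2 = {u}) \<or>
       (fst C1 \<inter> fst C2 = {} \<and> (\<exists>u v. u \<in> fst C1 \<and> v \<in> fst C2 \<and> is_path ends u v P \<and>
           fst P \<inter> (fst C1 \<union> fst C2) = {u, v}))"
    unfolding is_barbell_def by (elim exE conjE)
  have "snd C1 \<subseteq> E" "snd C2 \<subseteq> E" "snd P \<subseteq> E" using M(2) M_eq unfolding sg_union_def by auto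
  then have C_in: "fst C1 \<subseteq> S" "fst C2 \<subseteq> S" using circ[rule_format, OF conjI] C by blast+
  have "fst P \<subseteq> S" using P
  proof
    assume "fst C1 \<inter> fst C2 = {} \<and> (\<exists>u v. u \<in> fst C1 \<and> v \<in> fst C2 \<and> is_path ends u v P \<and>
      fst P \<inter> (fst C1 \<union> fst C2) = {u, v})"
    then obtain u v where "u \<in> S" "v \<in> S" "is_path ends u v P" using C_in by blast
    then show ?thesis using attached_at_path_inside[OF A _ \<open>snd P \<subseteq> E\<close>] by blast
  qed (use C_in in auto)
  then show ?thesis using C_in M_eq unfolding sg_union_def by auto
qed

lemma psi_cover_target_members_inside_attached:
  assumes A: "attached_at ends E S c" and circ: "\<forall>C. is_circuit ends C \<and> snd C \<subseteq> E \<longrightarrow> fst C \<subseteq> S"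
    and y: "y \<in> S" and H: "psi_cover ends sig V E x y 2 Pp Pn Tx Ty Cs"
  shows "\<forall>M\<in>#Ty + Cs. fst M \<subseteq> S"
proof
  fix M assume M: "M \<in># Ty + Cs"
  then have ME: "snd M \<subseteq> E" using psi_cover_member(2)[OF H] by simp
  consider "is_tadpole ends sig y M" | "signed_circuit ends sig M" using M psi_coverD(10,11)[OF H] by auto
  then show "fst M \<subseteq> S"
    using is_tadpole_inside_attached[OF A circ _ ME y] signed_circuit_inside_attached[OF A circ _ ME] by cases
qed

lemma psi_cover_edge_in_source_members:
  assumes H: "psi_cover ends sig V E x y 2 Pp Pn Tx Ty Cs" and e: "e \<in> E"
    and avoid: "\<forall>M\<in>#Ty + Cs. e \<notin> snd M" and M: "M \<in># Pp + Pn + Tx"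
  shows "e \<in> snd M"
proof (rule edge_count_eq_sizeD[OF _ M])
  note h = psi_coverD[OF H]
  have "edge_count e (Pp + Pn + Tx + Ty + Cs) = 6" using six_coverD(2)[OF h(4)] e by blast
  moreover have "edge_count e (Ty + Cs) = 0" using avoid by (rule edge_count_eq_0)
  ultimately show "edge_count e (Pp + Pn + Tx) = size (Pp + Pn + Tx)" using h(5-7) by simp
qed

lemma sg_sign_split:
  assumes "finite (snd Q)" "A \<subseteq> snd Q" "snd Q' = snd Q - A"
  shows "sg_sign sig Q = (\<Prod>e\<in>A. sig e) * sg_sign sig Q'"
proof -
  have "snd Q = A \<union> snd Q'" "A \<inter> snd Q' = {}" "finite A" "finite (snd Q')"
    using assms finite_subset by auto
  then show ?thesis unfolding sg_sign_def by (simp add: prod.union_disjoint)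
qed

lemma is_tadpole_restrict_attached:
  assumes A: "attached_at ends E S c" and circ: "\<forall>C. is_circuit ends C \<and> snd C \<subseteq> E \<longrightarrow> fst C \<subseteq> S"
    and T: "is_tadpole ends sig x T" "snd T \<subseteq> E" and x: "x \<notin> S"
  shows "is_tadpole ends sig c (fst T \<inter> S, {e\<in>snd T. ends e \<subseteq> S})"
proof -
  obtain z Q C where Q: "is_path ends x z Q" and C: "is_circuit ends C" "\<not> balanced sig C"
    and QC: "fst Q \<inter> fst C = {z}" and T_eq: "T = sg_union Q C"
    using T(1) unfolding is_tadpole_def by blast
  have "snd Q \<subseteq> E" "snd C \<subseteq> E" using T(2) T_eq unfolding sg_union_def by auto
  then have C_in: "fst C \<subseteq> S" using circ C(1) by blast
  then have path: "is_path ends c z (fst Q \<inter> S, {e\<in>snd Q. ends e \<subseteq> S})"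
    using attached_at_path_suffix[OF A Q \<open>snd Q \<subseteq> E\<close> x] QC by blast
  have meet: "fst (fst Q \<inter> S, {e\<in>snd Q. ends e \<subseteq> S}) \<inter> fst C = {z}" using QC C_in by auto
  have "(fst T \<inter> S, {e\<in>snd T. ends e \<subseteq> S}) = sg_union (fst Q \<inter> S, {e\<in>snd Q. ends e \<subseteq> S}) C"
    using T_eq C_in is_circuit_edge_ends[OF C(1)] unfolding sg_union_def by auto
  then show ?thesis unfolding is_tadpole_def using path C meet by blast
qed

text \<open>Restricting to a part \<open>S\<close> that meets the rest of the graph only in \<open>c\<close> and contains all
  circuits: the members at \<open>y \<in> S\<close> and the signed circuits already lie in \<open>S\<close>, and the edges outside
  \<open>S\<close> are then covered six times by the members at \<open>x \<notin> S\<close>, so all of them run through every one of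
  those members; cutting them off changes every path sign by the same factor.\<close>

lemma psi_cover_restrict_attached:
  assumes SG: "signed_graph ends sig V E"
    and A: "attached_at ends E S c" and circ: "\<forall>C. is_circuit ends C \<and> snd C \<subseteq> E \<longrightarrow> fst C \<subseteq> S"
    and S: "c \<in> S" "y \<in> S" "c \<noteq> y" "x \<notin> S"
    and H: "psi_cover ends sig V E x y 2 Pp Pn Tx Ty Cs"
  shows "\<exists>Pp' Pn'. psi_cover ends sig S {e\<in>E. ends e \<subseteq> S} c y 2 Pp' Pn'
           (image_mset (\<lambda>M. (fst M \<inter> S, {e\<in>snd M. ends e \<subseteq> S})) Tx) Ty Cs"
proof -
  note h = psi_coverD[OF H]
  define ES where "ES = {e\<in>E. ends e \<subseteq> S}"
  define r where "r = (\<lambda>M. (fst M \<inter> S, {e\<in>snd M. ends e \<subseteq> S}))"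
  define s where "s = (\<Prod>e\<in>E - ES. sig e)"
  have member_E: "snd M \<subseteq> E" "is_subgraph ends V E M" if "M \<in># Pp + Pn + Tx + Ty + Cs" for M
    using psi_cover_member[OF H that] by auto
  have inside: "fst M \<subseteq> S" if "M \<in># Ty + Cs" for M
    using psi_cover_target_members_inside_attached[OF A circ S(2) H] that by blast
  have outside_edges: "E - ES \<subseteq> snd M" if "M \<in># Pp + Pn + Tx" for M
  proof
    fix e assume e: "e \<in> E - ES"
    have "\<forall>M\<in>#Ty + Cs. e \<notin> snd M"
      using inside member_E(2) e unfolding is_subgraph_def ES_def by fastforce
    then show "e \<in> snd M" using psi_cover_edge_in_source_members[OF H _ _ that] e by blast
  qed
  show ?thesis
  proof (unfold ES_def[symmetric] r_def[symmetric], rule psi_cover_replace_source[OF H])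
    show "c \<in> S" "y \<in> S" "c \<noteq> y" using S by auto
    have "finite (E - ES)" "\<forall>e\<in>E - ES. sig e \<in> {1, -1}" using SG unfolding signed_graph_def by auto
    then show s: "s \<in> {1, -1}" unfolding s_def by (rule prod_sig_pm1)
    show "is_path ends c y (r Q) \<and> sg_sign sig (r Q) = s * sg_sign sig Q" if Q: "Q \<in># Pp + Pn" for Q
    proof
      have path: "is_path ends x y Q" using Q h(12,13) by auto
      show "is_path ends c y (r Q)"
        unfolding r_def using attached_at_path_suffix[OF A path member_E(1) S(4,2)] Q by auto
      have "snd (r Q) = snd Q - (E - ES)" using member_E(1)[of Q] Q unfolding r_def ES_def by auto
      moreover have "Q \<in># Pp + Pn + Tx" using Q by simp
      ultimately have "sg_sign sig Q = s * sg_sign sig (r Q)"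
        unfolding s_def using sg_sign_split[OF is_path_finite_edges[OF path] outside_edges] by blast
      then show "sg_sign sig (r Q) = s * sg_sign sig Q" using s by auto
    qed
    show "is_tadpole ends sig c (r T)" if "T \<in># Tx" for T
      unfolding r_def using is_tadpole_restrict_attached[OF A circ _ _ S(4)] h(9) member_E(1)[of T] that by auto
    have "is_subgraph ends S ES (r M)" if "M \<in># Pp + Pn + Tx" for M
      using member_E(2)[of M] that unfolding r_def ES_def is_subgraph_def by auto
    moreover have "is_subgraph ends S ES M" if M: "M \<in># Ty + Cs" for M
      using is_subgraph_inside[OF member_E(2) inside[OF M]] M unfolding ES_def by auto
    ultimately have "\<forall>M\<in>#image_mset r (Pp + Pn + Tx) + Ty + Cs. is_subgraph ends S ES M"
      by auto
    moreover have "edge_count e (image_mset r (Pp + Pn + Tx) + Ty + Cs) = 6" if e: "e \<in> ES" for e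
    proof -
      have "edge_count e (image_mset r (Pp + Pn + Tx)) = edge_count e (Pp + Pn + Tx)"
        using e unfolding r_def ES_def by (intro edge_count_image_mset) auto
      then show ?thesis using six_coverD(2)[OF h(4)] e unfolding ES_def by simp
    qed
    ultimately show "six_cover ends S ES (image_mset r (Pp + Pn + Tx) + Ty + Cs)"
      unfolding six_cover_iff by blast
  qed
qed

section \<open>Series connections\<close>

definition source_tadpoles_avoid_target ::
    "('e \<Rightarrow> 'v set) \<Rightarrow> ('e \<Rightarrow> int) \<Rightarrow> 'v set \<Rightarrow> 'e set \<Rightarrow> 'v \<Rightarrow> 'v \<Rightarrow> bool" where
  "source_tadpoles_avoid_target ends sig V E x y \<longleftrightarrow>
     (\<exists>Pp Pn Tx Ty Cs. psi_cover ends sig V E x y 2 Pp Pn Tx Ty Cs \<and> (\<forall>T\<in>#Tx. y \<notin> fst T))"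

definition target_tadpoles_avoid_source ::
    "('e \<Rightarrow> 'v set) \<Rightarrow> ('e \<Rightarrow> int) \<Rightarrow> 'v set \<Rightarrow> 'e set \<Rightarrow> 'v \<Rightarrow> 'v \<Rightarrow> bool" where
  "target_tadpoles_avoid_source ends sig V E x y \<longleftrightarrow>
     (\<exists>Pp Pn Tx Ty Cs. psi_cover ends sig V E x y 2 Pp Pn Tx Ty Cs \<and> (\<forall>T\<in>#Ty. x \<notin> fst T))"

lemma rtrancl_single_edge:
  assumes "(u, v) \<in> {(a, b). \<exists>f\<in>F. ends f = {a, b}}\<^sup>*" "F \<subseteq> {e}"
  shows "u = v \<or> u \<in> ends e \<and> v \<in> ends e"
  using assms(1)
proof (induction rule: rtrancl_induct)
  case (step w v)
  then have "ends e = {w, v}" using assms(2) by auto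
  then show ?case using step.IH by auto
qed simp

locale loopless_series =
  fixes ends :: "'e \<Rightarrow> 'v set" and sig :: "'e \<Rightarrow> int" and V :: "'v set" and E :: "'e set"
    and n :: nat and xs :: "nat \<Rightarrow> 'v" and PV :: "nat \<Rightarrow> 'v set" and PE :: "nat \<Rightarrow> 'e set"
  assumes graph: "signed_graph ends sig V E" and series: "series_conn ends sig V E n xs PV PE"
    and no_loop_parts: "B0_idx n xs = {}"
begin

lemma one_le_n: "1 \<le> n"
  using series unfolding series_conn_def by blast

lemma part_two_terminal: "i \<in> {1..n} \<Longrightarrow> two_terminal ends sig (PV i) (PE i) (xs (i - 1)) (xs i)"
  using series unfolding series_conn_def by blast

lemma terminals_distinct: "i \<in> {1..n} \<Longrightarrow> xs (i - 1) \<noteq> xs i"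
  using no_loop_parts unfolding B0_idx_def by blast

lemma V_eq: "V = (\<Union>i\<in>{1..n}. PV i)" and E_eq: "E = (\<Union>i\<in>{1..n}. PE i)"
  using series unfolding series_conn_def by blast+

lemma finite_E: "finite E" and finite_V: "finite V"
  and sig_E: "\<forall>e\<in>E. sig e \<in> {1, -1}" and ends_E: "\<forall>e\<in>E. ends e \<subseteq> V \<and> card (ends e) \<in> {1, 2}"
  using graph unfolding signed_graph_def by auto

lemma parts_edge_disjoint: "i \<in> {1..n} \<Longrightarrow> j \<in> {1..n} \<Longrightarrow> i < j \<Longrightarrow> PE i \<inter> PE j = {}"
  using series unfolding series_conn_def by blast

lemma parts_meet:
  assumes "i \<in> {1..n}" "j \<in> {1..n}" "i < j"
  shows "PV i \<inter> PV j = (if j = Suc i then {xs i} else {})"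
proof -
  have "(\<forall>k. i < k \<and> k < j \<longrightarrow> xs (k - 1) = xs k) \<longleftrightarrow> j = Suc i"
  proof
    assume between: "\<forall>k. i < k \<and> k < j \<longrightarrow> xs (k - 1) = xs k"
    show "j = Suc i"
    proof (rule ccontr)
      assume "j \<noteq> Suc i"
      then have "xs (Suc i - 1) = xs (Suc i)" "Suc i \<in> {1..n}" using between assms by auto
      then show False using terminals_distinct by blast
    qed
  qed auto
  then show ?thesis using series assms unfolding series_conn_def by auto
qed

lemma part_connected: "i \<in> {1..n} \<Longrightarrow> sg_connected ends (PV i, PE i)"
  using part_two_terminal unfolding two_terminal_def by blast

lemma part_edge_ends: "i \<in> {1..n} \<Longrightarrow> e \<in> PE i \<Longrightarrow> ends e \<subseteq> PV i"
  using part_connected unfolding sg_connected_def by auto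

lemma part_terminals: "i \<in> {1..n} \<Longrightarrow> xs (i - 1) \<in> PV i \<and> xs i \<in> PV i"
  using part_two_terminal unfolding two_terminal_def by blast

lemma terminals_inj:
  assumes "k \<le> n" "j \<le> n" "xs k = xs j"
  shows "k = j"
proof (rule ccontr)
  have less: False if "k < j" "j \<le> n" "xs k = xs j" for k j
  proof (cases "j = Suc k")
    case True then show False using terminals_distinct[of j] that by simp
  next
    case False
    then have "PV (Suc k) \<inter> PV j = (if j = Suc (Suc k) then {xs (Suc k)} else {})"
      using parts_meet[of "Suc k" j] that by auto
    then have "xs k = xs (Suc k)" using part_terminals[of "Suc k"] part_terminals[of j] that
      by (auto split: if_splits)
    then show False using terminals_distinct[of "Suc k"] that by simp
  qed
  assume "k \<noteq> j"
  then consider "k < j" | "j < k" by linarith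
  then show False using less[of k j] less[of j k] assms by cases auto
qed

lemma terminal_in_part:
  assumes m: "m \<le> n" and i: "i \<in> {1..n}" and x: "xs m \<in> PV i"
  shows "m = i - 1 \<or> m = i"
proof -
  define j where "j = (if m = 0 then 1 else m)"
  have j: "j \<in> {1..n}" "xs m \<in> PV j" "m = j - 1 \<or> m = j"
    using part_terminals[of j] m one_le_n unfolding j_def by auto
  consider "j = i" | "i < j" | "j < i" by linarith
  then show ?thesis
  proof cases
    case 2
    then have "xs m = xs i" using parts_meet[OF i j(1)] x j(2) by (auto split: if_splits)
    then show ?thesis using terminals_inj m i by auto
  next
    case 3
    then have "xs m = xs j" "i = Suc j" using parts_meet[OF j(1) i] x j(2) by (auto split: if_splits)
    then show ?thesis using terminals_inj[of m j] m j(1) by auto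
  qed (use j in auto)
qed

lemma part_single_edge:
  assumes i: "i \<in> {1..n}" and one: "card (PE i) = 1"
  obtains e where "PE i = {e}" "ends e = {xs (i - 1), xs i}" "PV i = {xs (i - 1), xs i}"
proof -
  obtain e where e: "PE i = {e}" using one card_1_singletonE by blast
  have reach: "u = v \<or> u \<in> ends e \<and> v \<in> ends e" if "u \<in> PV i" "v \<in> PV i" for u v
    using part_connected[OF i] that rtrancl_single_edge[of u v "PE i" ends e] e
    unfolding sg_connected_def by auto
  have ends_terminals: "xs (i - 1) \<in> ends e" "xs i \<in> ends e"
    using reach[of "xs (i - 1)" "xs i"] part_terminals[OF i] terminals_distinct[OF i] by auto
  have "e \<in> E" using e i E_eq by auto
  then have "card (ends e) \<in> {1, 2}" using ends_E by blast
  then have "finite (ends e)" "card (ends e) \<le> 2" by (auto intro: card_ge_0_finite)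
  then have ends: "ends e = {xs (i - 1), xs i}"
    using ends_terminals card_seteq[of "ends e" "{xs (i - 1), xs i}"] terminals_distinct[OF i] by auto
  moreover have "PV i = ends e"
    using reach[of _ "xs i"] part_terminals[OF i] ends_terminals part_edge_ends[OF i] e by auto
  ultimately show ?thesis using that e by simp
qed

definition prefix_V :: "nat \<Rightarrow> 'v set" where
  "prefix_V k = (\<Union>i\<in>{1..k}. PV i)"

definition prefix_E :: "nat \<Rightarrow> 'e set" where
  "prefix_E k = (\<Union>i\<in>{1..k}. PE i)"

lemma prefix_Suc: "prefix_V (Suc k) = prefix_V k \<union> PV (Suc k)" "prefix_E (Suc k) = prefix_E k \<union> PE (Suc k)"
  unfolding prefix_V_def prefix_E_def by (auto simp: atLeastAtMostSuc_conv)

lemma prefix_1: "prefix_V 1 = PV 1" "prefix_E 1 = PE 1"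
  unfolding prefix_V_def prefix_E_def by simp_all

lemma prefix_n: "prefix_V n = V" "prefix_E n = E"
  unfolding prefix_V_def prefix_E_def using V_eq E_eq by simp_all

lemma prefix_E_subset: "k \<le> n \<Longrightarrow> prefix_E k \<subseteq> E"
  unfolding prefix_E_def using E_eq by auto

lemma terminal_notin_prefix:
  assumes "j \<le> n" "k < j"
  shows "xs j \<notin> prefix_V k"
proof
  assume "xs j \<in> prefix_V k"
  then obtain i where "i \<in> {1..k}" "xs j \<in> PV i" unfolding prefix_V_def by blast
  then show False using terminal_in_part[OF assms(1), of i] assms by auto
qed

lemma prefix_meet:
  assumes "1 \<le> k" "k < n"
  shows "prefix_V k \<inter> PV (Suc k) = {xs k}" "prefix_E k \<inter> PE (Suc k) = {}"
proof -
  have "v = xs k" if v: "v \<in> prefix_V k" "v \<in> PV (Suc k)" for v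
  proof -
    obtain i where i: "i \<in> {1..k}" "v \<in> PV i" using v(1) unfolding prefix_V_def by blast
    then show ?thesis using parts_meet[of i "Suc k"] v(2) assms by (auto split: if_splits)
  qed
  moreover have "xs k \<in> prefix_V k" "xs k \<in> PV (Suc k)"
    using part_terminals[of k] part_terminals[of "Suc k"] assms unfolding prefix_V_def by auto
  ultimately show "prefix_V k \<inter> PV (Suc k) = {xs k}" by blast
  have "PE i \<inter> PE (Suc k) = {}" if "i \<in> {1..k}" for i
    using parts_edge_disjoint[of i "Suc k"] that assms by auto
  then show "prefix_E k \<inter> PE (Suc k) = {}" unfolding prefix_E_def by blast
qed

abbreviation B2 :: "nat set" where
  "B2 \<equiv> B2_idx n xs PE"

lemma B2_subset: "B2 \<subseteq> {1..n}"
  unfolding B2_idx_def by auto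

lemma finite_B2: "finite B2"
  using finite_subset[OF B2_subset] by simp

lemma card_part_not_B2:
  assumes i: "i \<in> {1..n}" "i \<notin> B2"
  shows "card (PE i) = 1"
proof -
  have "PE i \<noteq> {}"
  proof
    assume "PE i = {}"
    then have "xs (i - 1) = xs i"
      using part_connected[OF i(1)] part_terminals[OF i(1)] unfolding sg_connected_def by auto
    then show False using terminals_distinct[OF i(1)] by simp
  qed
  moreover have "finite (PE i)" using finite_subset[OF _ finite_E] E_eq i(1) by blast
  moreover have "\<not> 2 \<le> card (PE i)" using i terminals_distinct unfolding B2_idx_def by auto
  ultimately show ?thesis using card_gt_0_iff[of "PE i"] by linarith
qed

lemma part_not_B2_path:
  assumes "i \<in> {1..n}" "i \<notin> B2"
  shows "is_path ends (xs (i - 1)) (xs i) (PV i, PE i)"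
proof -
  obtain e where "PE i = {e}" "ends e = {xs (i - 1), xs i}" "PV i = {xs (i - 1), xs i}"
    using part_single_edge[OF assms(1) card_part_not_B2[OF assms]] .
  then show ?thesis using is_path_single_edge terminals_distinct[OF assms(1)] by metis
qed

text \<open>A part with a single edge is a bridge: the vertices of the parts before it, together with its
  first terminal, form a set that no other edge leaves, so by parity no circuit can use it.\<close>

lemma circuit_avoids_single_edge_part:
  assumes C: "is_circuit ends C" "snd C \<subseteq> E" and j: "j \<in> {1..n}" "card (PE j) = 1"
  shows "snd C \<inter> PE j = {}"
proof (rule ccontr)
  assume "snd C \<inter> PE j \<noteq> {}"
  obtain e where e: "PE j = {e}" "ends e = {xs (j - 1), xs j}"
    using part_single_edge[OF j] by metis
  then have eC: "e \<in> snd C" using \<open>snd C \<inter> PE j \<noteq> {}\<close> by auto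
  define L where "L = insert (xs (j - 1)) (prefix_V (j - 1))"
  have outside: "xs m \<notin> L" if "j \<le> m" "m \<le> n" for m
  proof -
    have "j - 1 \<le> n" "m \<noteq> j - 1" using that j(1) by auto
    then have "xs m \<noteq> xs (j - 1)" using terminals_inj[OF that(2)] by blast
    then show ?thesis using terminal_notin_prefix[of m "j - 1"] that j(1) unfolding L_def by auto
  qed
  have "ends e \<inter> L = {xs (j - 1)}" using e(2) outside[of j] j(1) unfolding L_def by auto
  then have crossing: "card (ends e) = 2" "card (ends e \<inter> L) = 1"
    using e(2) terminals_distinct[OF j(1)] by auto
  have "finite (snd C)" using finite_subset[OF C(2) finite_E] .
  moreover have "finite (fst C)"
    using is_circuit_vertices_subset[OF C(1), of V] C(2) ends_E finite_subset[OF _ finite_V] by blast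
  ultimately obtain f where f: "f \<in> snd C" "f \<noteq> e" "card (ends f) = 2" "card (ends f \<inter> L) = 1"
    using circuit_crossing_edge_not_unique[OF C(1) _ _ eC crossing] by blast
  then obtain i where i: "i \<in> {1..n}" "f \<in> PE i" using C(2) E_eq by auto
  have "i \<noteq> j" using e(1) f(2) i(2) by auto
  have "ends f \<subseteq> L \<or> ends f \<inter> L = {}"
  proof (cases "i < j")
    case True
    then show ?thesis using part_edge_ends[OF i] i unfolding L_def prefix_V_def by auto
  next
    case False
    have disj: "PV i \<inter> PV i' = {}" if "i' \<in> {1..j - 1}" for i'
    proof -
      have "i' < i" "i \<noteq> Suc i'" "i' \<in> {1..n}" using that False \<open>i \<noteq> j\<close> i(1) j(1) by auto
      then show ?thesis using parts_meet[of i' i] i(1) by auto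
    qed
    have "xs (j - 1) \<notin> PV i"
    proof
      assume "xs (j - 1) \<in> PV i"
      moreover have "j - 1 \<le> n" using j(1) by auto
      ultimately have "j - 1 = i - 1 \<or> j - 1 = i" using terminal_in_part i(1) by blast
      then show False using False \<open>i \<noteq> j\<close> i(1) j(1) by auto
    qed
    then have "PV i \<inter> L = {}" using disj unfolding L_def prefix_V_def by blast
    then show ?thesis using part_edge_ends[OF i] by blast
  qed
  then show False using f(3,4) by (auto simp: Int_absorb2)
qed

lemma circuits_in_sole_B2_part:
  assumes B: "B2 = {j}" and C: "is_circuit ends C" "snd C \<subseteq> E"
  shows "fst C \<subseteq> PV j"
proof -
  have j: "j \<in> {1..n}" using B B2_subset by auto
  have "snd C \<subseteq> PE j"
  proof
    fix e assume "e \<in> snd C"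
    then obtain i where i: "i \<in> {1..n}" "e \<in> PE i" using C(2) E_eq by auto
    show "e \<in> PE j"
    proof (rule ccontr)
      assume "e \<notin> PE j"
      then have "i \<notin> B2" using B i(2) by auto
      then show False
        using circuit_avoids_single_edge_part[OF C i(1) card_part_not_B2[OF i(1)]] i(2) \<open>e \<in> snd C\<close> by auto
    qed
  qed
  then show ?thesis using is_circuit_vertices_subset[OF C(1)] part_edge_ends[OF j] by blast
qed

lemma terminal_0_notin_part: "i \<in> {2..n} \<Longrightarrow> xs 0 \<notin> PV i"
  using terminal_in_part[of 0 i] by auto

lemma terminal_n_notin_part: "i \<in> {1..<n} \<Longrightarrow> xs n \<notin> PV i"
  using terminal_in_part[of n i] by auto

lemma B2_prefix_Suc: "B2 \<inter> {1..Suc k} = B2 \<inter> {1..k} \<union> (if Suc k \<in> B2 then {Suc k} else {})"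
  by (auto simp: atLeastAtMostSuc_conv)

lemma sig_prefix_E: "k \<le> n \<Longrightarrow> \<forall>e\<in>prefix_E k. sig e \<in> {1, -1}"
  using prefix_E_subset sig_E by blast

lemma sig_PE: "i \<in> {1..n} \<Longrightarrow> \<forall>e\<in>PE i. sig e \<in> {1, -1}"
  using E_eq sig_E by blast

context
  fixes Pp Pn Tx Ty Cs :: "nat \<Rightarrow> ('v, 'e) sg multiset"
  assumes part_cover: "\<And>i. i \<in> B2 \<Longrightarrow>
    psi_cover ends sig (PV i) (PE i) (xs (i - 1)) (xs i) 2 (Pp i) (Pn i) (Tx i) (Ty i) (Cs i)"
begin

text \<open>The tadpoles at the source come from the first part in \<open>B\<^sub>2\<close> and those at the target from the
  last one; the two implications record that they only meet the far terminal if these do.\<close>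

definition prefix_covered :: "nat \<Rightarrow> bool" where
  "prefix_covered k \<longleftrightarrow>
     (B2 \<inter> {1..k} = {} \<longrightarrow> is_path ends (xs 0) (xs k) (prefix_V k, prefix_E k)) \<and>
     (B2 \<inter> {1..k} \<noteq> {} \<longrightarrow> (\<exists>Pp' Pn' Tx' Ty' Cs'.
        psi_cover ends sig (prefix_V k) (prefix_E k) (xs 0) (xs k) 2 Pp' Pn' Tx' Ty' Cs' \<and>
        ((\<forall>T\<in>#Tx (Min (B2 \<inter> {1..k})). xs n \<notin> fst T) \<longrightarrow> (\<forall>T\<in>#Tx'. xs n \<notin> fst T)) \<and>
        ((\<forall>T\<in>#Ty (Max (B2 \<inter> {1..k})). xs 0 \<notin> fst T) \<longrightarrow> (\<forall>T\<in>#Ty'. xs 0 \<notin> fst T))))"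

lemma prefix_covered_pathI:
  "B2 \<inter> {1..k} = {} \<Longrightarrow> is_path ends (xs 0) (xs k) (prefix_V k, prefix_E k) \<Longrightarrow> prefix_covered k"
  unfolding prefix_covered_def by blast

lemma prefix_covered_coverI:
  assumes "psi_cover ends sig (prefix_V k) (prefix_E k) (xs 0) (xs k) 2 Pp' Pn' Tx' Ty' Cs'" "B2 \<inter> {1..k} \<noteq> {}"
    "\<forall>T\<in>#Tx (Min (B2 \<inter> {1..k})). xs n \<notin> fst T \<Longrightarrow> \<forall>T\<in>#Tx'. xs n \<notin> fst T"
    "\<forall>T\<in>#Ty (Max (B2 \<inter> {1..k})). xs 0 \<notin> fst T \<Longrightarrow> \<forall>T\<in>#Ty'. xs 0 \<notin> fst T"
  shows "prefix_covered k"
  using assms unfolding prefix_covered_def by blast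

lemma prefix_covered_1: "prefix_covered 1"
proof (cases "1 \<in> B2")
  case True
  then have "B2 \<inter> {1..1} = {1}" by auto
  then show ?thesis using part_cover[OF True] prefix_covered_coverI[of 1] unfolding prefix_1 by simp
next
  case False
  then have "B2 \<inter> {1..1} = {}" by auto
  moreover have "is_path ends (xs 0) (xs 1) (prefix_V 1, prefix_E 1)"
    unfolding prefix_1 using part_not_B2_path[of 1] False one_le_n by simp
  ultimately show ?thesis by (rule prefix_covered_pathI)
qed

lemma prefix_covered_Suc_of_path:
  assumes k: "1 \<le> k" "k < n" and empty: "B2 \<inter> {1..k} = {}"
    and P: "is_path ends (xs 0) (xs k) (prefix_V k, prefix_E k)"
  shows "prefix_covered (Suc k)"
proof (cases "Suc k \<in> B2")
  case False
  have "is_path ends (xs k) (xs (Suc k)) (PV (Suc k), PE (Suc k))"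
    using part_not_B2_path[OF _ False] k by simp
  from is_path_append[OF P this] have "is_path ends (xs 0) (xs (Suc k)) (prefix_V (Suc k), prefix_E (Suc k))"
    using prefix_meet[OF k] by (simp add: sg_union_def prefix_Suc)
  moreover have "B2 \<inter> {1..Suc k} = {}" using empty False B2_prefix_Suc[of k] by auto
  ultimately show ?thesis by (intro prefix_covered_pathI)
next
  case True
  obtain Pp' Pn' where c: "psi_cover ends sig (prefix_V (Suc k)) (prefix_E (Suc k)) (xs 0) (xs (Suc k)) 2 Pp' Pn'
      (image_mset (sg_union (prefix_V k, prefix_E k)) (Tx (Suc k))) (Ty (Suc k)) (Cs (Suc k))"
    using psi_cover_prepend_path[OF P part_cover[OF True, simplified]] prefix_meet[OF k] sig_prefix_E[of k] k
    unfolding prefix_Suc by auto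
  moreover have "B2 \<inter> {1..Suc k} = {Suc k}" using empty True B2_prefix_Suc[of k] by auto
  moreover have "\<forall>T\<in>#image_mset (sg_union (prefix_V k, prefix_E k)) (Tx (Suc k)). xs n \<notin> fst T"
    if "\<forall>T\<in>#Tx (Suc k). xs n \<notin> fst T"
    using that terminal_notin_prefix[of n k] k by (auto simp: sg_union_def)
  ultimately show ?thesis by (intro prefix_covered_coverI[OF c]) simp_all
qed

lemma prefix_covered_Suc_of_cover:
  assumes k: "1 \<le> k" "k < n" and nonempty: "B2 \<inter> {1..k} \<noteq> {}"
    and c: "psi_cover ends sig (prefix_V k) (prefix_E k) (xs 0) (xs k) 2 Pp' Pn' Tx' Ty' Cs'"
    and tx: "\<forall>T\<in>#Tx (Min (B2 \<inter> {1..k})). xs n \<notin> fst T \<Longrightarrow> \<forall>T\<in>#Tx'. xs n \<notin> fst T"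
    and ty: "\<forall>T\<in>#Ty (Max (B2 \<inter> {1..k})). xs 0 \<notin> fst T \<Longrightarrow> \<forall>T\<in>#Ty'. xs 0 \<notin> fst T"
  shows "prefix_covered (Suc k)"
proof (cases "Suc k \<in> B2")
  case False
  have "is_path ends (xs k) (xs (Suc k)) (PV (Suc k), PE (Suc k))"
    using part_not_B2_path[OF _ False] k by simp
  moreover have "PV (Suc k) \<inter> prefix_V k = {xs k}" "PE (Suc k) \<inter> prefix_E k = {}"
    using prefix_meet[OF k] by auto
  ultimately obtain Pp'' Pn'' where c': "psi_cover ends sig (prefix_V (Suc k)) (prefix_E (Suc k)) (xs 0) (xs (Suc k)) 2
      Pp'' Pn'' Tx' (image_mset (sg_union (PV (Suc k), PE (Suc k))) Ty') Cs'"
    using psi_cover_append_path[OF c] sig_PE[of "Suc k"] k unfolding prefix_Suc by fastforce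
  moreover have "B2 \<inter> {1..Suc k} = B2 \<inter> {1..k}" using False B2_prefix_Suc[of k] by auto
  moreover have "\<forall>T\<in>#image_mset (sg_union (PV (Suc k), PE (Suc k))) Ty'. xs 0 \<notin> fst T"
    if "\<forall>T\<in>#Ty'. xs 0 \<notin> fst T"
    using that terminal_0_notin_part[of "Suc k"] k by (auto simp: sg_union_def)
  ultimately show ?thesis using nonempty tx ty by (intro prefix_covered_coverI[OF c']) simp_all
next
  case True
  obtain Pp'' Pn'' Cs'' where c': "psi_cover ends sig (prefix_V (Suc k)) (prefix_E (Suc k)) (xs 0) (xs (Suc k)) 2
      Pp'' Pn'' Tx' (Ty (Suc k)) Cs''"
    using psi_cover_series[OF c part_cover[OF True, simplified] prefix_meet[OF k]] unfolding prefix_Suc by blast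
  have "Min (B2 \<inter> {1..k}) < Suc k" "Max (B2 \<inter> {1..k}) < Suc k"
    using nonempty Min_in[of "B2 \<inter> {1..k}"] Max_in[of "B2 \<inter> {1..k}"] by auto
  moreover have "B2 \<inter> {1..Suc k} = insert (Suc k) (B2 \<inter> {1..k})" using True B2_prefix_Suc[of k] by auto
  ultimately have "Min (B2 \<inter> {1..Suc k}) = Min (B2 \<inter> {1..k})" "Max (B2 \<inter> {1..Suc k}) = Suc k"
    "B2 \<inter> {1..Suc k} \<noteq> {}"
    using nonempty by simp_all
  then show ?thesis using tx by (intro prefix_covered_coverI[OF c']) simp_all
qed

lemma prefix_covered_Suc:
  assumes "1 \<le> k" "k < n" "prefix_covered k"
  shows "prefix_covered (Suc k)"
  using assms prefix_covered_Suc_of_path[OF assms(1,2)] prefix_covered_Suc_of_cover[OF assms(1,2)]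
  unfolding prefix_covered_def[of k] by blast

lemma first_B2_part_tadpoles_avoid_target:
  assumes "B2 \<noteq> {}" "B2 \<noteq> {n}"
  shows "\<forall>T\<in>#Tx (Min B2). xs n \<notin> fst T"
proof -
  have B: "Min B2 \<in> B2" "\<forall>j\<in>B2. Min B2 \<le> j" using assms(1) finite_B2 by auto
  have "Min B2 \<noteq> n"
  proof
    assume "Min B2 = n"
    then have "B2 \<subseteq> {n}" using B(2) B2_subset by fastforce
    then show False using assms by blast
  qed
  then have "Min B2 \<in> {1..<n}" using B(1) B2_subset by fastforce
  then show ?thesis using psi_cover_member(1)[OF part_cover[OF B(1)]] terminal_n_notin_part by fastforce
qed

lemma last_B2_part_tadpoles_avoid_source:
  assumes "B2 \<noteq> {}" "B2 \<noteq> {1}"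
  shows "\<forall>T\<in>#Ty (Max B2). xs 0 \<notin> fst T"
proof -
  have B: "Max B2 \<in> B2" "\<forall>j\<in>B2. j \<le> Max B2" using assms(1) finite_B2 by auto
  have "Max B2 \<noteq> 1"
  proof
    assume "Max B2 = 1"
    then have "B2 \<subseteq> {1}" using B(2) B2_subset by fastforce
    then show False using assms by blast
  qed
  then have "Max B2 \<in> {2..n}" using B(1) B2_subset by fastforce
  then show ?thesis using psi_cover_member(1)[OF part_cover[OF B(1)]] terminal_0_notin_part by fastforce
qed

lemma series_psi_cover:
  assumes "B2 \<noteq> {}"
  obtains Pp' Pn' Tx' Ty' Cs' where "psi_cover ends sig V E (xs 0) (xs n) 2 Pp' Pn' Tx' Ty' Cs'"
    "(\<forall>T\<in>#Tx (Min B2). xs n \<notin> fst T) \<Longrightarrow> (\<forall>T\<in>#Tx'. xs n \<notin> fst T)"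
    "(\<forall>T\<in>#Ty (Max B2). xs 0 \<notin> fst T) \<Longrightarrow> (\<forall>T\<in>#Ty'. xs 0 \<notin> fst T)"
proof -
  have "prefix_covered k" if "1 \<le> k" "k \<le> n" for k
    using that
  proof (induction k rule: dec_induct)
    case base then show ?case using prefix_covered_1 by simp
  next
    case (step k) then show ?case using prefix_covered_Suc by simp
  qed
  then have "prefix_covered n" using one_le_n by simp
  moreover have "B2 \<inter> {1..n} = B2" using B2_subset by blast
  ultimately have "\<exists>Pp' Pn' Tx' Ty' Cs'. psi_cover ends sig V E (xs 0) (xs n) 2 Pp' Pn' Tx' Ty' Cs' \<and>
      ((\<forall>T\<in>#Tx (Min B2). xs n \<notin> fst T) \<longrightarrow> (\<forall>T\<in>#Tx'. xs n \<notin> fst T)) \<and>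
      ((\<forall>T\<in>#Ty (Max B2). xs 0 \<notin> fst T) \<longrightarrow> (\<forall>T\<in>#Ty'. xs 0 \<notin> fst T))"
    using assms unfolding prefix_covered_def prefix_n by simp
  then show ?thesis using that by blast
qed

end

lemma last_part_attached: "attached_at ends E (PV n) (xs (n - 1))"
  unfolding attached_at_def
proof (intro ballI impI)
  fix e assume e: "e \<in> E" and cross: "ends e \<inter> PV n \<noteq> {} \<and> \<not> ends e \<subseteq> PV n"
  obtain j where j: "j \<in> {1..n}" "e \<in> PE j" using e E_eq by auto
  have "j \<noteq> n" using j cross part_edge_ends by blast
  then have "PV j \<inter> PV n = (if n = Suc j then {xs j} else {})" using parts_meet[OF j(1)] j(1) one_le_n by auto
  moreover have "ends e \<inter> PV n \<subseteq> PV j \<inter> PV n" using part_edge_ends[OF j] by auto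
  ultimately have "n = Suc j" "ends e \<inter> PV n \<subseteq> {xs j}" using cross by (auto split: if_splits)
  then show "ends e \<inter> PV n = {xs (n - 1)}" using cross by auto
qed

lemma first_part_attached: "attached_at ends E (PV 1) (xs 1)"
  unfolding attached_at_def
proof (intro ballI impI)
  fix e assume e: "e \<in> E" and cross: "ends e \<inter> PV 1 \<noteq> {} \<and> \<not> ends e \<subseteq> PV 1"
  obtain j where j: "j \<in> {1..n}" "e \<in> PE j" using e E_eq by auto
  have "j \<noteq> 1" using j cross part_edge_ends by blast
  then have "PV 1 \<inter> PV j = (if j = Suc 1 then {xs 1} else {})" using parts_meet[OF _ j(1)] j(1) one_le_n by auto
  moreover have "ends e \<inter> PV 1 \<subseteq> PV 1 \<inter> PV j" using part_edge_ends[OF j] by auto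
  ultimately have "ends e \<inter> PV 1 \<subseteq> {xs 1}" using cross by (auto split: if_splits)
  then show "ends e \<inter> PV 1 = {xs 1}" using cross by auto
qed

lemma induced_edges_sole_B2_part:
  assumes B: "B2 = {j}"
  shows "{e\<in>E. ends e \<subseteq> PV j} = PE j"
proof (intro equalityI subsetI)
  have j: "j \<in> {1..n}" using B B2_subset by auto
  fix e assume "e \<in> {e\<in>E. ends e \<subseteq> PV j}"
  then obtain i where i: "i \<in> {1..n}" "e \<in> PE i" and sub: "ends e \<subseteq> PV j" using E_eq by auto
  show "e \<in> PE j"
  proof (rule ccontr)
    assume "e \<notin> PE j"
    then have "i \<noteq> j" "i \<notin> B2" using i(2) B by auto
    then obtain f where "PE i = {f}" "ends f = {xs (i - 1), xs i}"
      using part_single_edge[OF i(1) card_part_not_B2[OF i(1)]] by metis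
    then have "xs (i - 1) \<in> PV j" "xs i \<in> PV j" using i(2) sub by auto
    moreover have "i - 1 \<le> n" "i \<le> n" using i(1) by auto
    ultimately have "i - 1 = j - 1 \<or> i - 1 = j" "i = j - 1 \<or> i = j"
      using terminal_in_part[OF _ j] by blast+
    then show False using \<open>i \<noteq> j\<close> i(1) j by auto
  qed
next
  fix e assume "e \<in> PE j"
  then show "e \<in> {e\<in>E. ends e \<subseteq> PV j}" using part_edge_ends E_eq B B2_subset by auto
qed

lemma restrict_to_last_part:
  assumes n: "2 \<le> n" and B: "B2 = {n}"
    and H: "psi_cover ends sig V E (xs 0) (xs n) 2 Pp Pn Tx Ty Cs" and avoid: "\<forall>T\<in>#Tx. xs n \<notin> fst T"
  shows "source_tadpoles_avoid_target ends sig (PV n) (PE n) (xs (n - 1)) (xs n)"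
proof -
  have nn: "n \<in> {1..n}" "n \<in> {2..n}" using n by auto
  have circ: "\<forall>C. is_circuit ends C \<and> snd C \<subseteq> E \<longrightarrow> fst C \<subseteq> PV n"
    using circuits_in_sole_B2_part[OF B] by blast
  have S: "xs (n - 1) \<in> PV n" "xs n \<in> PV n" "xs (n - 1) \<noteq> xs n"
    using part_terminals[OF nn(1)] terminals_distinct[OF nn(1)] by auto
  obtain Pp' Pn' where "psi_cover ends sig (PV n) (PE n) (xs (n - 1)) (xs n) 2 Pp' Pn'
      (image_mset (\<lambda>M. (fst M \<inter> PV n, {e \<in> snd M. ends e \<subseteq> PV n})) Tx) Ty Cs"
    using psi_cover_restrict_attached[OF graph last_part_attached circ S terminal_0_notin_part[OF nn(2)] H]
    unfolding induced_edges_sole_B2_part[OF B] by blast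
  moreover have "\<forall>T\<in>#image_mset (\<lambda>M. (fst M \<inter> PV n, {e \<in> snd M. ends e \<subseteq> PV n})) Tx. xs n \<notin> fst T"
    using avoid by auto
  ultimately show ?thesis unfolding source_tadpoles_avoid_target_def by blast
qed

lemma restrict_to_first_part:
  assumes n: "2 \<le> n" and B: "B2 = {1}"
    and H: "psi_cover ends sig V E (xs 0) (xs n) 2 Pp Pn Tx Ty Cs" and avoid: "\<forall>T\<in>#Ty. xs 0 \<notin> fst T"
  shows "target_tadpoles_avoid_source ends sig (PV 1) (PE 1) (xs 0) (xs 1)"
proof -
  have one: "1 \<in> {1..n}" using n by auto
  have circ: "\<forall>C. is_circuit ends C \<and> snd C \<subseteq> E \<longrightarrow> fst C \<subseteq> PV 1"
    using circuits_in_sole_B2_part[OF B] by blast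
  have S: "xs 1 \<in> PV 1" "xs 0 \<in> PV 1" "xs 1 \<noteq> xs 0" "xs n \<notin> PV 1"
    using part_terminals[OF one] terminals_distinct[OF one] terminal_in_part[of n 1] n by auto
  obtain Pp' Pn' where c: "psi_cover ends sig (PV 1) (PE 1) (xs 1) (xs 0) 2 Pp' Pn'
      (image_mset (\<lambda>M. (fst M \<inter> PV 1, {e \<in> snd M. ends e \<subseteq> PV 1})) Ty) Tx Cs"
    using psi_cover_restrict_attached[OF graph first_part_attached circ S psi_cover_swap[OF H]]
    unfolding induced_edges_sole_B2_part[OF B] by blast
  moreover have "\<forall>T\<in>#image_mset (\<lambda>M. (fst M \<inter> PV 1, {e \<in> snd M. ends e \<subseteq> PV 1})) Ty. xs 0 \<notin> fst T"
    using avoid by auto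
  ultimately show ?thesis using psi_cover_swap[OF c] unfolding target_tadpoles_avoid_source_def by blast
qed

lemma series_cover_tadpoles_avoid_terminals:
  assumes n: "2 \<le> n" and B: "B2 \<noteq> {}"
    and covers: "\<forall>i\<in>B2. \<exists>Pp Pn Tx Ty Cs. psi_cover ends sig (PV i) (PE i) (xs (i - 1)) (xs i) 2 Pp Pn Tx Ty Cs"
    and first: "B2 = {1} \<Longrightarrow> target_tadpoles_avoid_source ends sig (PV 1) (PE 1) (xs 0) (xs 1)"
    and last: "B2 = {n} \<Longrightarrow> source_tadpoles_avoid_target ends sig (PV n) (PE n) (xs (n - 1)) (xs n)"
  shows "\<exists>Pp Pn Tx Ty Cs. psi_cover ends sig V E (xs 0) (xs n) 2 Pp Pn Tx Ty Cs \<and>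
    (\<forall>T\<in>#Tx. xs n \<notin> fst T) \<and> (\<forall>T\<in>#Ty. xs 0 \<notin> fst T)"
proof -
  have "\<forall>i\<in>B2. \<exists>Pp Pn Tx Ty Cs. psi_cover ends sig (PV i) (PE i) (xs (i - 1)) (xs i) 2 Pp Pn Tx Ty Cs \<and>
      (B2 = {1} \<longrightarrow> (\<forall>T\<in>#Ty. xs 0 \<notin> fst T)) \<and> (B2 = {n} \<longrightarrow> (\<forall>T\<in>#Tx. xs n \<notin> fst T))"
  proof
    fix i assume i: "i \<in> B2"
    consider "B2 = {1}" | "B2 = {n}" | "B2 \<noteq> {1}" "B2 \<noteq> {n}" by blast
    then show "\<exists>Pp Pn Tx Ty Cs. psi_cover ends sig (PV i) (PE i) (xs (i - 1)) (xs i) 2 Pp Pn Tx Ty Cs \<and>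
      (B2 = {1} \<longrightarrow> (\<forall>T\<in>#Ty. xs 0 \<notin> fst T)) \<and> (B2 = {n} \<longrightarrow> (\<forall>T\<in>#Tx. xs n \<notin> fst T))"
      by cases (use i n first last covers in \<open>auto simp: source_tadpoles_avoid_target_def target_tadpoles_avoid_source_def\<close>)
  qed
  then obtain Pp Pn Tx Ty Cs where part_covers: "\<forall>i\<in>B2.
      psi_cover ends sig (PV i) (PE i) (xs (i - 1)) (xs i) 2 (Pp i) (Pn i) (Tx i) (Ty i) (Cs i) \<and>
      (B2 = {1} \<longrightarrow> (\<forall>T\<in>#Ty i. xs 0 \<notin> fst T)) \<and> (B2 = {n} \<longrightarrow> (\<forall>T\<in>#Tx i. xs n \<notin> fst T))"
    by (rule bchoice_5)
  then have part_cover: "\<And>i. i \<in> B2 \<Longrightarrow>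
      psi_cover ends sig (PV i) (PE i) (xs (i - 1)) (xs i) 2 (Pp i) (Pn i) (Tx i) (Ty i) (Cs i)" by blast
  have "\<forall>T\<in>#Tx (Min B2). xs n \<notin> fst T"
    using first_B2_part_tadpoles_avoid_target[OF part_cover B] part_covers by (cases "B2 = {n}") auto
  moreover have "\<forall>T\<in>#Ty (Max B2). xs 0 \<notin> fst T"
    using last_B2_part_tadpoles_avoid_source[OF part_cover B] part_covers by (cases "B2 = {1}") auto
  moreover obtain Pp' Pn' Tx' Ty' Cs' where "psi_cover ends sig V E (xs 0) (xs n) 2 Pp' Pn' Tx' Ty' Cs'"
    "(\<forall>T\<in>#Tx (Min B2). xs n \<notin> fst T) \<Longrightarrow> (\<forall>T\<in>#Tx'. xs n \<notin> fst T)"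
    "(\<forall>T\<in>#Ty (Max B2). xs 0 \<notin> fst T) \<Longrightarrow> (\<forall>T\<in>#Ty'. xs 0 \<notin> fst T)"
    using series_psi_cover[OF part_cover B] by blast
  ultimately show ?thesis by blast
qed

end

theorem mainTheorem3:
  fixes ends :: "'e \<Rightarrow> 'v set" and sig :: "'e \<Rightarrow> int" and V :: "'v set" and E :: "'e set"
    and n :: nat and xs :: "nat \<Rightarrow> 'v" and PV :: "nat \<Rightarrow> 'v set" and PE :: "nat \<Rightarrow> 'e set"
  assumes "signed_graph ends sig V E"
    and "series_parts ends sig V E n xs PV PE"
    and "n \<ge> 2"
    and "B0_idx n xs = {}"
    and "B2_idx n xs PE \<noteq> {}"
    and "\<forall>i\<in>B2_idx n xs PE. \<exists>Pp Pn Tx Ty Cs.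
            psi_cover ends sig (PV i) (PE i) (xs (i - 1)) (xs i) 2 Pp Pn Tx Ty Cs"
  shows "exactly_one3
     (\<exists>Pp Pn Tx Ty Cs. psi_cover ends sig V E (xs 0) (xs n) 2 Pp Pn Tx Ty Cs \<and>
         (\<forall>T\<in>#Tx. xs n \<notin> fst T) \<and> (\<forall>T\<in>#Ty. xs 0 \<notin> fst T))
     (B2_idx n xs PE = {1} \<and>
        (\<forall>Pp Pn Tx Ty Cs. psi_cover ends sig (PV 1) (PE 1) (xs 0) (xs 1) 2 Pp Pn Tx Ty Cs \<longrightarrow>
           (\<exists>T\<in>#Ty. xs 0 \<in> fst T)))
     (B2_idx n xs PE = {n} \<and>
        (\<forall>Pp Pn Tx Ty Cs. psi_cover ends sig (PV n) (PE n) (xs (n - 1)) (xs n) 2 Pp Pn Tx Ty Cs \<longrightarrow>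
           (\<exists>T\<in>#Tx. xs n \<in> fst T)))"
proof -
  interpret loopless_series ends sig V E n xs PV PE
    using assms(1,2,4) unfolding series_parts_def by unfold_locales auto
  let ?first = "target_tadpoles_avoid_source ends sig (PV 1) (PE 1) (xs 0) (xs 1)"
  let ?last = "source_tadpoles_avoid_target ends sig (PV n) (PE n) (xs (n - 1)) (xs n)"
  have one: "(\<forall>Pp Pn Tx Ty Cs. psi_cover ends sig (PV 1) (PE 1) (xs 0) (xs 1) 2 Pp Pn Tx Ty Cs \<longrightarrow>
      (\<exists>T\<in>#Ty. xs 0 \<in> fst T)) \<longleftrightarrow> \<not> ?first"
    unfolding target_tadpoles_avoid_source_def by blast
  have two: "(\<forall>Pp Pn Tx Ty Cs. psi_cover ends sig (PV n) (PE n) (xs (n - 1)) (xs n) 2 Pp Pn Tx Ty Cs \<longrightarrow>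
      (\<exists>T\<in>#Tx. xs n \<in> fst T)) \<longleftrightarrow> \<not> ?last"
    unfolding source_tadpoles_avoid_target_def by blast
  have "{1} \<noteq> {n}" using assms(3) by simp
  then show ?thesis unfolding exactly_one3_def one two
    using series_cover_tadpoles_avoid_terminals[OF assms(3,5,6)]
      restrict_to_first_part[OF assms(3)] restrict_to_last_part[OF assms(3)] by blast
qed

end
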